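(* Consider the stochastic $K$-armed bandit with losses supported in $[0,1]$ and run the Regularized-EXP3 algorithm described in the context with mirror map $\phi_\alpha$, $\alpha\in[0,1]$, and parameters $\eta=1/\sqrt T$, $\varepsilon=\log T/\sqrt T$, $\lambda=\gamma_T/\sqrt{KT}$, where $(\gamma_T)$ is a positive sequence with $\gamma_T\le(\log T)^2$ and $\gamma_T/(\log T)^2\to0$, and, if $\alpha\in[0,\tfrac13)$, additionally $\log T/\gamma_T\to0$. Then for all $y\in\Delta_\varepsilon$ and $T\ge K$, $$\mathbb E\left[\langle\mu,\overline x_T-y\rangle\right]\le\frac{C_\alpha(K,T)}{\sqrt T}+\frac{K}{\sqrt T}+\frac1{\sqrt T}\cdot\frac{\gamma_T^2}{(\log T)^2}+\frac{K\gamma_T\log T}{2\sqrt T},$$ where $\overline x_T=\frac1T\sum_{t=1}^Tx_t$ and $C_\alpha(K,T)=\frac{3K\log T}{2}$ if $\alpha\in[0,\tfrac13)$, $C_\alpha(K,T)=3K\log K$ if $\alpha\in[\tfrac13,1]$.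
   Context: Stochastic $K$-armed bandit: arm $a$ has loss distribution $\mathcal P_a$ on $[0,1]$ with mean $\mu_a$; $\mu=(\mu_1,\dots,\mu_K)$; at round $t$ the learner picks $A_t$ and observes $\ell_t\sim\mathcal P_{A_t}$. $\Delta_\varepsilon=\{x\in\mathbb R^K: x_j\ge\varepsilon\ \forall j,\ \sum_jx_j=1\}$; $R_\varepsilon(x)=-\sum_i\ln x_i+\frac1\varepsilon\sum_ix_i$. Mirror maps on $\mathbb R^K_{>0}$: $\phi_\alpha(x)=-\sum_i\frac{x_i^\alpha-\alpha x_i-(1-\alpha)}{\alpha(1-\alpha)}$ for $0<\alpha<1$, $\phi_0(x)=-\sum_i(\log x_i-x_i+1)$, $\phi_1(x)=\sum_i(x_i\log x_i-x_i+1)$. $D_\phi(x,y)=\phi(x)-\phi(y)-\langle\nabla\phi(y),x-y\rangle$. Regularized-EXP3: $z_1=(1/K,\dots,1/K)$; for $t=1,\dots,T$: $x_t=\arg\min_{x\in\Delta_\varepsilon}D_\phi(x,z_t)$; draw $A_t$ with $\mathbb P(A_t=j\mid\text{past})=x_{t,j}$, observe $\ell_t$; $\widehat\ell_{t,j}=\mathbb I\{A_t=j\}\ell_t/x_{t,j}$; $\widetilde\ell_t=\widehat\ell_t+\lambda\nabla R_\varepsilon(x_t)$; $z_{t+1}=\arg\min_x\{\eta\langle\widetilde\ell_t,x\rangle+D_\phi(x,x_t)\}$. *)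

theory Defs
  imports "HOL-Probability.Probability"
begin

text \<open>Arms are the elements of a finite type 'k; K = CARD('k). Vectors in R^K are
  functions 'k => real.\<close>

definition phi_scalar :: "real \<Rightarrow> real \<Rightarrow> real" where
  "phi_scalar \<alpha> s =
     (if \<alpha> = 0 then - (ln s - s + 1)
      else if \<alpha> = 1 then s * ln s - s + 1
      else - ((s powr \<alpha> - \<alpha> * s - (1 - \<alpha>)) / (\<alpha> * (1 - \<alpha>))))"

definition phi :: "real \<Rightarrow> ('k::finite \<Rightarrow> real) \<Rightarrow> real" where
  "phi \<alpha> x = (\<Sum>i\<in>UNIV. phi_scalar \<alpha> (x i))"

definition bregman :: "real \<Rightarrow> ('k::finite \<Rightarrow> real) \<Rightarrow> ('k \<Rightarrow> real) \<Rightarrow> real" where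
  "bregman \<alpha> x y = phi \<alpha> x - phi \<alpha> y - (\<Sum>i\<in>UNIV. deriv (phi_scalar \<alpha>) (y i) * (x i - y i))"

definition simplex_eps :: "real \<Rightarrow> ('k::finite \<Rightarrow> real) set" where
  "simplex_eps \<epsilon> = {x. (\<forall>j. \<epsilon> \<le> x j) \<and> (\<Sum>j\<in>UNIV. x j) = 1}"

definition R_eps :: "real \<Rightarrow> ('k::finite \<Rightarrow> real) \<Rightarrow> real" where
  "R_eps \<epsilon> x = - (\<Sum>i\<in>UNIV. ln (x i)) + (1 / \<epsilon>) * (\<Sum>i\<in>UNIV. x i)"

definition grad_R_eps :: "real \<Rightarrow> ('k::finite \<Rightarrow> real) \<Rightarrow> 'k \<Rightarrow> real" where
  "grad_R_eps \<epsilon> x i = - 1 / x i + 1 / \<epsilon>"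

definition proj :: "real \<Rightarrow> real \<Rightarrow> ('k::finite \<Rightarrow> real) \<Rightarrow> ('k \<Rightarrow> real)" where
  "proj \<alpha> \<epsilon> z = arg_min (\<lambda>x. bregman \<alpha> x z) (\<lambda>x. x \<in> simplex_eps \<epsilon>)"

definition mirror_step :: "real \<Rightarrow> real \<Rightarrow> ('k::finite \<Rightarrow> real) \<Rightarrow> ('k \<Rightarrow> real) \<Rightarrow> ('k \<Rightarrow> real)" where
  "mirror_step \<alpha> \<eta> lt x =
     arg_min (\<lambda>z. \<eta> * (\<Sum>i\<in>UNIV. lt i * z i) + bregman \<alpha> z x) (\<lambda>z. \<forall>i. 0 < z i)"

definition loss_est :: "('k \<Rightarrow> real) \<Rightarrow> 'k \<Rightarrow> real \<Rightarrow> 'k \<Rightarrow> real" where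
  "loss_est x a l j = (if j = a then l / x j else 0)"

definition loss_tilde :: "real \<Rightarrow> real \<Rightarrow> ('k::finite \<Rightarrow> real) \<Rightarrow> 'k \<Rightarrow> real \<Rightarrow> 'k \<Rightarrow> real" where
  "loss_tilde lam \<epsilon> x a l j = loss_est x a l j + lam * grad_R_eps \<epsilon> x j"

definition rexp3_next :: "real \<Rightarrow> real \<Rightarrow> real \<Rightarrow> real \<Rightarrow> ('k::finite \<Rightarrow> real) \<Rightarrow> 'k \<Rightarrow> real \<Rightarrow> ('k \<Rightarrow> real)" where
  "rexp3_next \<alpha> \<eta> \<epsilon> lam x a l = proj \<alpha> \<epsilon> (mirror_step \<alpha> \<eta> (loss_tilde lam \<epsilon> x a l) x)"

definition rexp3_x1 :: "real \<Rightarrow> real \<Rightarrow> ('k::finite \<Rightarrow> real)" where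
  "rexp3_x1 \<alpha> \<epsilon> = proj \<alpha> \<epsilon> (\<lambda>_. 1 / real CARD('k))"

definition mean_loss :: "('k \<Rightarrow> real measure) \<Rightarrow> 'k \<Rightarrow> real" where
  "mean_loss P a = (\<integral>l. l \<partial>P a)"

text \<open>rexp3_expected_cum P alpha eta eps lam n x = E[ sum_(s=1..n) <mu, x_s> ] when the
  algorithm is started at x_1 = x (backward recursion over the random arm A ~ x and
  the random loss l ~ P A).\<close>
primrec rexp3_expected_cum ::
  "('k::finite \<Rightarrow> real measure) \<Rightarrow> real \<Rightarrow> real \<Rightarrow> real \<Rightarrow> real \<Rightarrow> nat \<Rightarrow> ('k \<Rightarrow> real) \<Rightarrow> real" where
  "rexp3_expected_cum P \<alpha> \<eta> \<epsilon> lam 0 x = 0"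
| "rexp3_expected_cum P \<alpha> \<eta> \<epsilon> lam (Suc n) x =
     (\<Sum>i\<in>UNIV. mean_loss P i * x i)
     + (\<Sum>a\<in>UNIV. x a * (\<integral>l. rexp3_expected_cum P \<alpha> \<eta> \<epsilon> lam n (rexp3_next \<alpha> \<eta> \<epsilon> lam x a l) \<partial>P a))"

end

theory Submission
  imports Defs
begin

(* Regularized-EXP3 is online mirror descent with mirror map phi_alpha on the loss estimates
   lt = l^ + lam * grad R_eps(x). The three-point identity for Bregman divergences and the
   generalized Pythagorean inequality for the projection onto Delta_eps give, for every y in
   Delta_eps,
     D(y, x') <= D(y, x) - eta * <lt, x - y> + eta^2 * sum_i x_i^(2 - alpha) * lt_i^2,
   where the local norm comes from phi''(s) = s^(alpha - 2). Averaging over the played arm and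
   the observed loss, <l^, x - y> becomes <mu, x - y>, the regularizer costs at most lam (K - 1)
   because <grad R_eps(x), x - y> >= 1 - K on Delta_eps, and the local norm is at most
   (lam/eps)^2 + 2 lam/eps + K. Summing over the rounds (an induction on the horizon with
   potential D(y, x)/eta) bounds the regret by these per-round costs plus D(y, x_1)/(eta T), and
   D(y, x_1) <= D(y, uniform), which is at most (3/2) K log(1/(K eps)) for alpha < 1/3 and
   3 (K - 1) otherwise. The parameter choice turns this into the stated bound once T > K^2; for
   T <= K^2 the bound already exceeds the trivial regret bound 1. *)

section \<open>The scalar mirror map\<close>

definition phi_grad :: "real \<Rightarrow> real \<Rightarrow> real" where
  "phi_grad \<alpha> s = (if \<alpha> = 1 then ln s else (1 - s powr (\<alpha> - 1)) / (1 - \<alpha>))"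

lemma has_real_derivative_phi_scalar:
  assumes "0 \<le> \<alpha>" "\<alpha> \<le> 1" "0 < s"
  shows "(phi_scalar \<alpha> has_real_derivative phi_grad \<alpha> s) (at s)"
proof -
  consider "\<alpha> = 0" | "\<alpha> = 1" | "0 < \<alpha>" "\<alpha> < 1" using assms by linarith
  then show ?thesis
  proof cases
    case 1
    have "((\<lambda>s. - (ln s - s + 1)) has_real_derivative - (1/s - 1 + 0)) (at s)"
      using assms by (auto intro!: derivative_eq_intros)
    moreover have "phi_scalar \<alpha> = (\<lambda>s. - (ln s - s + 1))"
      using 1 by (auto simp: phi_scalar_def fun_eq_iff)
    ultimately show ?thesis using 1 assms by (simp add: phi_grad_def powr_minus_divide)
  next
    case 2
    have "((\<lambda>s. s * ln s - s + 1) has_real_derivative (1 * ln s + s * (1/s) - 1 + 0)) (at s)"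
      using assms by (auto intro!: derivative_eq_intros)
    moreover have "phi_scalar \<alpha> = (\<lambda>s. s * ln s - s + 1)"
      using 2 by (auto simp: phi_scalar_def fun_eq_iff)
    ultimately show ?thesis using 2 assms by (simp add: phi_grad_def)
  next
    case 3
    have "((\<lambda>s. - ((s powr \<alpha> - \<alpha> * s - (1 - \<alpha>)) / (\<alpha> * (1 - \<alpha>)))) has_real_derivative
        - ((\<alpha> * s powr (\<alpha> - 1) - \<alpha> * 1 - 0) / (\<alpha> * (1 - \<alpha>)))) (at s)"
      using assms 3 by (auto intro!: derivative_eq_intros)
    moreover have "- ((\<alpha> * s powr (\<alpha> - 1) - \<alpha> * 1 - 0) / (\<alpha> * (1 - \<alpha>))) = phi_grad \<alpha> s"
      using 3 by (simp add: phi_grad_def field_simps)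
    moreover have "phi_scalar \<alpha> = (\<lambda>s. - ((s powr \<alpha> - \<alpha> * s - (1 - \<alpha>)) / (\<alpha> * (1 - \<alpha>))))"
      using 3 by (auto simp: phi_scalar_def fun_eq_iff)
    ultimately show ?thesis by simp
  qed
qed

lemma deriv_phi_scalar:
  "0 \<le> \<alpha> \<Longrightarrow> \<alpha> \<le> 1 \<Longrightarrow> 0 < s \<Longrightarrow> deriv (phi_scalar \<alpha>) s = phi_grad \<alpha> s"
  by (rule DERIV_imp_deriv) (rule has_real_derivative_phi_scalar)

lemma has_real_derivative_phi_grad:
  assumes "0 \<le> \<alpha>" "\<alpha> \<le> 1" "0 < s"
  shows "(phi_grad \<alpha> has_real_derivative s powr (\<alpha> - 2)) (at s)"
proof (cases "\<alpha> = 1")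
  case True
  have "(ln has_real_derivative 1/s) (at s)" using assms by (auto intro!: derivative_eq_intros)
  moreover have "phi_grad \<alpha> = ln" using True by (auto simp: phi_grad_def fun_eq_iff)
  ultimately show ?thesis using True assms by (simp add: powr_minus_divide)
next
  case False
  have "((\<lambda>s. (1 - s powr (\<alpha> - 1)) / (1 - \<alpha>)) has_real_derivative
      (0 - (\<alpha> - 1) * s powr (\<alpha> - 1 - 1)) / (1 - \<alpha>)) (at s)"
    using assms False by (auto intro!: derivative_eq_intros)
  moreover have "(0 - (\<alpha> - 1) * s powr (\<alpha> - 1 - 1)) / (1 - \<alpha>) = s powr (\<alpha> - 2)"
    using False by (simp add: field_simps)
  moreover have "phi_grad \<alpha> = (\<lambda>s. (1 - s powr (\<alpha> - 1)) / (1 - \<alpha>))"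
    using False by (auto simp: phi_grad_def fun_eq_iff)
  ultimately show ?thesis by simp
qed

lemma phi_grad_strict_mono:
  assumes "0 \<le> \<alpha>" "\<alpha> \<le> 1" "0 < a" "a < b"
  shows "phi_grad \<alpha> a < phi_grad \<alpha> b"
proof (cases "\<alpha> = 1")
  case True then show ?thesis using assms by (simp add: phi_grad_def)
next
  case False
  have "b powr (\<alpha> - 1) < a powr (\<alpha> - 1)"
    using assms False by (intro powr_less_mono2_neg) auto
  then show ?thesis using False assms by (simp add: phi_grad_def divide_strict_right_mono)
qed

lemma phi_grad_le_iff:
  assumes "0 \<le> \<alpha>" "\<alpha> \<le> 1" "0 < a" "0 < b"
  shows "phi_grad \<alpha> a \<le> phi_grad \<alpha> b \<longleftrightarrow> a \<le> b"
  using phi_grad_strict_mono[OF assms(1,2) assms(3), of b] phi_grad_strict_mono[OF assms(1,2) assms(4), of a]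
  by (cases a b rule: linorder_cases) auto

lemma phi_grad_diff_ge:
  assumes "0 \<le> \<alpha>" "\<alpha> \<le> 1" "0 < z" "z \<le> x"
  shows "x powr (\<alpha> - 2) * (x - z) \<le> phi_grad \<alpha> x - phi_grad \<alpha> z"
proof (cases "z = x")
  case False
  then have "z < x" using assms by simp
  then obtain \<xi> where \<xi>: "z < \<xi>" "\<xi> < x"
    "phi_grad \<alpha> x - phi_grad \<alpha> z = (x - z) * \<xi> powr (\<alpha> - 2)"
    using MVT2[of z x "phi_grad \<alpha>" "\<lambda>s. s powr (\<alpha> - 2)"] has_real_derivative_phi_grad[OF assms(1,2)]
      assms by force
  have "x powr (\<alpha> - 2) \<le> \<xi> powr (\<alpha> - 2)"
    using \<xi> assms by (intro powr_mono2') auto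
  then show ?thesis using \<xi> \<open>z < x\<close> by (simp add: mult.commute mult_right_mono)
qed simp

lemma ex_phi_grad_eq:
  assumes "0 \<le> \<alpha>" "\<alpha> \<le> 1" "0 < x" "c \<le> phi_grad \<alpha> x"
  shows "\<exists>z>0. phi_grad \<alpha> z = c"
proof (cases "\<alpha> = 1")
  case True then show ?thesis by (intro exI[of _ "exp c"]) (simp add: phi_grad_def)
next
  case False
  then have "\<alpha> < 1" using assms by simp
  have "c * (1 - \<alpha>) \<le> 1 - x powr (\<alpha> - 1)"
    using assms \<open>\<alpha> < 1\<close> by (simp add: phi_grad_def field_simps)
  moreover have "0 < x powr (\<alpha> - 1)" using assms by simp
  ultimately have "c * (1 - \<alpha>) < 1" by linarith
  then have pos: "0 < 1 - (1 - \<alpha>) * c" by (simp add: algebra_simps)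
  define z where "z = (1 - (1 - \<alpha>) * c) powr (1 / (\<alpha> - 1))"
  have "z powr (\<alpha> - 1) = 1 - (1 - \<alpha>) * c"
    unfolding z_def using pos \<open>\<alpha> < 1\<close> by (simp add: powr_powr)
  then have "phi_grad \<alpha> z = c" using \<open>\<alpha> < 1\<close> by (simp add: phi_grad_def)
  moreover have "0 < z" using pos by (simp add: z_def)
  ultimately show ?thesis by blast
qed

definition bregman_scalar :: "real \<Rightarrow> real \<Rightarrow> real \<Rightarrow> real" where
  "bregman_scalar \<alpha> a b = phi_scalar \<alpha> a - phi_scalar \<alpha> b - phi_grad \<alpha> b * (a - b)"

lemma bregman_scalar_three_point:
  "bregman_scalar \<alpha> a c - bregman_scalar \<alpha> a b - bregman_scalar \<alpha> b c
     = (phi_grad \<alpha> b - phi_grad \<alpha> c) * (a - b)"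
  by (simp add: bregman_scalar_def algebra_simps)

lemma bregman_scalar_pos:
  assumes "0 \<le> \<alpha>" "\<alpha> \<le> 1" "0 < a" "0 < b" "a \<noteq> b"
  shows "0 < bregman_scalar \<alpha> a b"
proof -
  have "phi_grad \<alpha> b * (a - b) < phi_scalar \<alpha> a - phi_scalar \<alpha> b"
    if "0 < u" "u < v" "(a, b) = (u, v) \<or> (a, b) = (v, u)" for u v
  proof -
    obtain \<xi> where \<xi>: "u < \<xi>" "\<xi> < v" "phi_scalar \<alpha> v - phi_scalar \<alpha> u = (v - u) * phi_grad \<alpha> \<xi>"
      using MVT2[OF \<open>u < v\<close>, of "phi_scalar \<alpha>" "phi_grad \<alpha>"] has_real_derivative_phi_scalar[OF assms(1,2)]
        \<open>0 < u\<close> by force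
    have "phi_grad \<alpha> u < phi_grad \<alpha> \<xi>" "phi_grad \<alpha> \<xi> < phi_grad \<alpha> v"
      using phi_grad_strict_mono[OF assms(1,2)] \<xi> \<open>0 < u\<close> by auto
    then have "(v - u) * phi_grad \<alpha> u < (v - u) * phi_grad \<alpha> \<xi>"
      "(v - u) * phi_grad \<alpha> \<xi> < (v - u) * phi_grad \<alpha> v"
      using \<open>u < v\<close> by simp_all
    then show ?thesis using that(3) \<xi>(3) by (auto simp: algebra_simps)
  qed
  from this[of a b] this[of b a] show ?thesis
    using assms(3-5) by (cases "a < b") (auto simp: bregman_scalar_def)
qed

lemma bregman_scalar_nonneg:
  "0 \<le> \<alpha> \<Longrightarrow> \<alpha> \<le> 1 \<Longrightarrow> 0 < a \<Longrightarrow> 0 < b \<Longrightarrow> 0 \<le> bregman_scalar \<alpha> a b"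
  using bregman_scalar_pos[of \<alpha> a b] by (cases "a = b") (auto simp: bregman_scalar_def)

lemma bregman_scalar_le_local_norm:
  assumes "0 \<le> \<alpha>" "\<alpha> \<le> 1" "0 < x" "0 < z" "0 \<le> c" "phi_grad \<alpha> z = phi_grad \<alpha> x - c"
  shows "bregman_scalar \<alpha> x z \<le> x powr (2 - \<alpha>) * c\<^sup>2"
proof -
  have "bregman_scalar \<alpha> x z + bregman_scalar \<alpha> z x = (phi_grad \<alpha> x - phi_grad \<alpha> z) * (x - z)"
    by (simp add: bregman_scalar_def algebra_simps)
  also have "\<dots> = c * (x - z)" using assms(6) by simp
  finally have "bregman_scalar \<alpha> x z + bregman_scalar \<alpha> z x = c * (x - z)" .
  then have bound: "bregman_scalar \<alpha> x z \<le> c * (x - z)"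
    using bregman_scalar_nonneg[OF assms(1,2,4,3)] by linarith
  have "z \<le> x" using phi_grad_le_iff[OF assms(1,2,4,3)] assms(5,6) by simp
  then have "x powr (\<alpha> - 2) * (x - z) \<le> c"
    using phi_grad_diff_ge[OF assms(1,2,4) \<open>z \<le> x\<close>] assms(6) by simp
  then have "x powr (2 - \<alpha>) * (x powr (\<alpha> - 2) * (x - z)) \<le> x powr (2 - \<alpha>) * c"
    by (intro mult_left_mono) auto
  then have "x - z \<le> x powr (2 - \<alpha>) * c"
    using assms(3) by (simp add: mult.assoc[symmetric] powr_add[symmetric])
  then have "c * (x - z) \<le> c * (x powr (2 - \<alpha>) * c)"
    using assms(5) by (rule mult_left_mono)
  then show ?thesis using bound by (simp add: power2_eq_square algebra_simps)
qed

section \<open>Bregman divergence, mirror step and projection\<close>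

lemma bregman_eq_sum_bregman_scalar:
  assumes "0 \<le> \<alpha>" "\<alpha> \<le> 1" "\<And>i. 0 < y i"
  shows "bregman \<alpha> x y = (\<Sum>i\<in>UNIV. bregman_scalar \<alpha> (x i) (y i))"
  using assms by (simp add: bregman_def phi_def bregman_scalar_def deriv_phi_scalar sum_subtractf)

lemma bregman_nonneg:
  assumes "0 \<le> \<alpha>" "\<alpha> \<le> 1" "\<And>i. 0 < x i" "\<And>i. 0 < y i"
  shows "0 \<le> bregman \<alpha> x y"
  unfolding bregman_eq_sum_bregman_scalar[OF assms(1,2,4)]
  using bregman_scalar_nonneg[OF assms(1,2)] assms(3,4) by (simp add: sum_nonneg)

lemma bregman_pos:
  fixes x y :: "'k::finite \<Rightarrow> real"
  assumes "0 \<le> \<alpha>" "\<alpha> \<le> 1" "\<And>i. 0 < x i" "\<And>i. 0 < y i" "x \<noteq> y"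
  shows "0 < bregman \<alpha> x y"
proof -
  obtain j where "x j \<noteq> y j" using assms(5) by auto
  then have "0 < bregman_scalar \<alpha> (x j) (y j)" using bregman_scalar_pos[OF assms(1,2)] assms(3,4) by simp
  then show ?thesis unfolding bregman_eq_sum_bregman_scalar[OF assms(1,2,4)]
    using bregman_scalar_nonneg[OF assms(1,2)] assms(3,4) by (intro sum_pos2[of UNIV j]) auto
qed

lemma bregman_three_point:
  assumes "0 \<le> \<alpha>" "\<alpha> \<le> 1" "\<And>i. 0 < b i" "\<And>i. 0 < c i"
  shows "bregman \<alpha> a c - bregman \<alpha> a b - bregman \<alpha> b c
     = (\<Sum>i\<in>UNIV. (phi_grad \<alpha> (b i) - phi_grad \<alpha> (c i)) * (a i - b i))"
  unfolding bregman_eq_sum_bregman_scalar[OF assms(1,2,3)] bregman_eq_sum_bregman_scalar[OF assms(1,2,4)]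
  by (simp add: sum_subtractf[symmetric] bregman_scalar_three_point)

lemma mirror_step_grad:
  fixes x lt :: "'k::finite \<Rightarrow> real"
  assumes "0 \<le> \<alpha>" "\<alpha> \<le> 1" "\<And>i. 0 < x i" "\<And>i. 0 \<le> lt i" "0 \<le> \<eta>"
  shows "0 < mirror_step \<alpha> \<eta> lt x i"
    and "phi_grad \<alpha> (mirror_step \<alpha> \<eta> lt x i) = phi_grad \<alpha> (x i) - \<eta> * lt i"
proof -
  have "\<exists>w>0. phi_grad \<alpha> w = phi_grad \<alpha> (x i) - \<eta> * lt i" for i
    using ex_phi_grad_eq[OF assms(1,2) assms(3)[of i], of "phi_grad \<alpha> (x i) - \<eta> * lt i"] assms(4)[of i] assms(5)
    by simp
  then obtain w where w_pos: "\<And>i. 0 < w i"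
    and w_grad: "\<And>i. phi_grad \<alpha> (w i) = phi_grad \<alpha> (x i) - \<eta> * lt i"
    by metis
  define F where "F = (\<lambda>z. \<eta> * (\<Sum>i\<in>UNIV. lt i * z i) + bregman \<alpha> z x)"
  have F_diff: "F z - F w = bregman \<alpha> z w" for z
  proof -
    have "bregman \<alpha> z x - bregman \<alpha> z w - bregman \<alpha> w x = (\<Sum>i\<in>UNIV. - (\<eta> * (lt i * (z i - w i))))"
      unfolding bregman_three_point[OF assms(1,2) w_pos assms(3)] by (intro sum.cong) (simp_all add: w_grad)
    moreover have "\<eta> * (\<Sum>i\<in>UNIV. lt i * z i) - \<eta> * (\<Sum>i\<in>UNIV. lt i * w i)
        = (\<Sum>i\<in>UNIV. \<eta> * (lt i * (z i - w i)))"
      by (simp add: sum_distrib_left right_diff_distrib sum_subtractf)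
    ultimately show ?thesis by (simp add: F_def sum_negf)
  qed
  have "F w \<le> F z" if "\<forall>i. 0 < z i" for z
    using F_diff[of z] bregman_nonneg[OF assms(1,2), of z w] that w_pos by simp
  then have "is_arg_min F (\<lambda>z. \<forall>i. 0 < z i) w" using w_pos by (simp add: is_arg_min_linorder)
  then have "is_arg_min F (\<lambda>z. \<forall>i. 0 < z i) (mirror_step \<alpha> \<eta> lt x)"
    unfolding mirror_step_def F_def[symmetric] arg_min_def by (rule someI[of _ w])
  then have pos: "\<forall>i. 0 < mirror_step \<alpha> \<eta> lt x i" and "F (mirror_step \<alpha> \<eta> lt x) \<le> F w"
    using w_pos by (auto simp: is_arg_min_linorder)
  then have "\<not> 0 < bregman \<alpha> (mirror_step \<alpha> \<eta> lt x) w"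
    using F_diff[of "mirror_step \<alpha> \<eta> lt x"] by linarith
  then have "mirror_step \<alpha> \<eta> lt x = w"
    using bregman_pos[OF assms(1,2), of "mirror_step \<alpha> \<eta> lt x" w] pos w_pos by auto
  then show "0 < mirror_step \<alpha> \<eta> lt x i"
    and "phi_grad \<alpha> (mirror_step \<alpha> \<eta> lt x i) = phi_grad \<alpha> (x i) - \<eta> * lt i"
    by (simp_all add: w_pos w_grad)
qed

lemma simplex_eps_pos: "0 < \<epsilon> \<Longrightarrow> x \<in> simplex_eps \<epsilon> \<Longrightarrow> 0 < x i"
  by (auto simp: simplex_eps_def intro: less_le_trans)

lemma simplex_eps_le_1:
  assumes "0 \<le> \<epsilon>" "x \<in> simplex_eps \<epsilon>"
  shows "x (i::'k::finite) \<le> 1"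
proof -
  have "x i \<le> (\<Sum>j\<in>UNIV. x j)"
    using assms by (intro member_le_sum) (auto simp: simplex_eps_def intro: order_trans)
  then show ?thesis using assms by (simp add: simplex_eps_def)
qed

lemma compact_simplex_eps:
  assumes "0 \<le> \<epsilon>"
  shows "compact (simplex_eps \<epsilon> :: ('k::finite \<Rightarrow> real) set)"
proof -
  have "compactin (product_topology (\<lambda>_::'k. euclidean) UNIV) (PiE UNIV (\<lambda>_::'k. {\<epsilon>..1::real}))"
    by (subst compactin_PiE) (auto simp: compactin_euclidean_iff)
  then have "compact (PiE UNIV (\<lambda>_::'k. {\<epsilon>..1::real}))"
    by (simp add: euclidean_product_topology compactin_euclidean_iff)
  moreover have "closed {x::'k \<Rightarrow> real. (\<Sum>j\<in>UNIV. x j) = 1}"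
    by (intro closed_Collect_eq continuous_intros continuous_on_product_coordinates)
  moreover have "simplex_eps \<epsilon> = PiE UNIV (\<lambda>_::'k. {\<epsilon>..1::real}) \<inter> {x. (\<Sum>j\<in>UNIV. x j) = 1}"
    using simplex_eps_le_1[OF assms] by (auto simp: simplex_eps_def)
  ultimately show ?thesis by (simp add: compact_Int_closed)
qed

lemma simplex_eps_convex_comb:
  fixes x y :: "'k::finite \<Rightarrow> real"
  assumes "x \<in> simplex_eps \<epsilon>" "y \<in> simplex_eps \<epsilon>" "0 \<le> t" "t \<le> 1"
  shows "(\<lambda>i. (1 - t) * x i + t * y i) \<in> simplex_eps \<epsilon>"
proof -
  have "(1 - t) * \<epsilon> + t * \<epsilon> \<le> (1 - t) * x i + t * y i" for i
    using assms by (intro add_mono mult_left_mono) (auto simp: simplex_eps_def)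
  moreover have "(\<Sum>i\<in>UNIV. (1 - t) * x i + t * y i) = (1 - t) * (\<Sum>i\<in>UNIV. x i) + t * (\<Sum>i\<in>UNIV. y i)"
    by (simp add: sum.distrib sum_distrib_left)
  ultimately show ?thesis using assms by (simp add: simplex_eps_def algebra_simps)
qed

lemma DERIV_nonneg_at_right_min:
  fixes G :: "real \<Rightarrow> real"
  assumes "(G has_real_derivative D) (at x)" "0 < \<delta>" "\<And>t. 0 < t \<Longrightarrow> t \<le> \<delta> \<Longrightarrow> G x \<le> G (x + t)"
  shows "0 \<le> D"
proof (rule ccontr)
  assume "\<not> 0 \<le> D"
  then obtain r where r: "0 < r" "\<And>h. 0 < h \<Longrightarrow> h < r \<Longrightarrow> G (x + h) < G x"
    using DERIV_neg_dec_right[OF assms(1)] by force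
  define h where "h = min (r/2) \<delta>"
  have "0 < h" "h < r" "h \<le> \<delta>" using r(1) assms(2) by (auto simp: h_def)
  then show False using r(2)[of h] assms(3)[of h] by linarith
qed

lemma has_real_derivative_bregman_scalar_line:
  assumes "0 \<le> \<alpha>" "\<alpha> \<le> 1" "0 < a"
  shows "((\<lambda>t. bregman_scalar \<alpha> (a + t * d) b) has_real_derivative
           (phi_grad \<alpha> a - phi_grad \<alpha> b) * d) (at 0)"
proof -
  have "((\<lambda>t. a + t * d) has_real_derivative d) (at 0)" by (auto intro!: derivative_eq_intros)
  moreover have "(phi_scalar \<alpha> has_real_derivative phi_grad \<alpha> a) (at ((\<lambda>t. a + t * d) 0))"
    using has_real_derivative_phi_scalar[OF assms] by simp
  ultimately have "((\<lambda>t. phi_scalar \<alpha> (a + t * d)) has_real_derivative phi_grad \<alpha> a * d) (at 0)"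
    by (rule DERIV_chain2[rotated])
  then show ?thesis unfolding bregman_scalar_def
    by (auto intro!: derivative_eq_intros simp: algebra_simps)
qed

lemma proj_is_arg_min:
  fixes z :: "'k::finite \<Rightarrow> real"
  assumes "0 \<le> \<alpha>" "\<alpha> \<le> 1" "0 < \<epsilon>" "simplex_eps \<epsilon> \<noteq> ({} :: ('k \<Rightarrow> real) set)" "\<And>i. 0 < z i"
  shows "is_arg_min (\<lambda>x. bregman \<alpha> x z) (\<lambda>x. x \<in> simplex_eps \<epsilon>) (proj \<alpha> \<epsilon> z)"
proof -
  have "continuous_on {\<epsilon>..} (phi_scalar \<alpha>)"
    by (intro continuous_at_imp_continuous_on ballI DERIV_isCont[OF has_real_derivative_phi_scalar[OF assms(1,2)]])
      (use assms(3) in auto)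
  moreover have coord: "continuous_on (simplex_eps \<epsilon>) (\<lambda>x. x i)" for i
    by (rule continuous_on_subset[OF continuous_on_product_coordinates]) simp
  ultimately have "continuous_on (simplex_eps \<epsilon>) (\<lambda>x. phi_scalar \<alpha> (x i))" for i
    by (rule continuous_on_compose2) (auto simp: simplex_eps_def)
  then have "continuous_on (simplex_eps \<epsilon>) (\<lambda>x. bregman \<alpha> x z)"
    unfolding bregman_eq_sum_bregman_scalar[OF assms(1,2,5)] bregman_scalar_def
    by (intro continuous_intros coord)
  moreover have "compact (simplex_eps \<epsilon> :: ('k \<Rightarrow> real) set)"
    using assms(3) by (intro compact_simplex_eps) simp
  ultimately obtain xm where "xm \<in> simplex_eps \<epsilon>"
    "\<And>y. y \<in> simplex_eps \<epsilon> \<Longrightarrow> bregman \<alpha> xm z \<le> bregman \<alpha> y z"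
    using continuous_attains_inf[OF _ assms(4)] by metis
  then have "is_arg_min (\<lambda>x. bregman \<alpha> x z) (\<lambda>x. x \<in> simplex_eps \<epsilon>) xm"
    by (simp add: is_arg_min_linorder)
  then show ?thesis unfolding proj_def arg_min_def by (rule someI[of _ xm])
qed

lemma proj_in_simplex_eps:
  fixes z :: "'k::finite \<Rightarrow> real"
  assumes "0 \<le> \<alpha>" "\<alpha> \<le> 1" "0 < \<epsilon>" "simplex_eps \<epsilon> \<noteq> ({} :: ('k \<Rightarrow> real) set)" "\<And>i. 0 < z i"
  shows "proj \<alpha> \<epsilon> z \<in> simplex_eps \<epsilon>"
  using proj_is_arg_min[OF assms] by (simp add: is_arg_min_def)

text \<open>The first-order optimality condition of the projection is exactly the three-point term.\<close>
lemma bregman_proj_pythagoras: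
  fixes y z :: "'k::finite \<Rightarrow> real"
  assumes "0 \<le> \<alpha>" "\<alpha> \<le> 1" "0 < \<epsilon>" "\<And>i. 0 < z i" "y \<in> simplex_eps \<epsilon>"
  shows "bregman \<alpha> y (proj \<alpha> \<epsilon> z) + bregman \<alpha> (proj \<alpha> \<epsilon> z) z \<le> bregman \<alpha> y z"
proof -
  have nonempty: "simplex_eps \<epsilon> \<noteq> ({} :: ('k \<Rightarrow> real) set)" using assms(5) by auto
  define p where "p = proj \<alpha> \<epsilon> z"
  have p_min: "p \<in> simplex_eps \<epsilon>" "\<And>x. x \<in> simplex_eps \<epsilon> \<Longrightarrow> bregman \<alpha> p z \<le> bregman \<alpha> x z"
    using proj_is_arg_min[OF assms(1-3) nonempty assms(4)] by (auto simp: p_def is_arg_min_linorder)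
  have p_pos: "\<And>i. 0 < p i" using simplex_eps_pos[OF assms(3) p_min(1)] .
  define G where "G = (\<lambda>t. bregman \<alpha> (\<lambda>i. p i + t * (y i - p i)) z)"
  have deriv: "(G has_real_derivative (\<Sum>i\<in>UNIV. (phi_grad \<alpha> (p i) - phi_grad \<alpha> (z i)) * (y i - p i))) (at 0)"
    unfolding G_def bregman_eq_sum_bregman_scalar[OF assms(1,2,4)]
    by (intro DERIV_sum has_real_derivative_bregman_scalar_line assms(1,2) p_pos)
  have min: "G 0 \<le> G (0 + t)" if "0 < t" "t \<le> 1" for t
  proof -
    have "(\<lambda>i. p i + t * (y i - p i)) = (\<lambda>i. (1 - t) * p i + t * y i)" by (auto simp: algebra_simps)
    also have "\<dots> \<in> simplex_eps \<epsilon>"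
      using simplex_eps_convex_comb[OF p_min(1) assms(5)] that by simp
    finally show ?thesis using p_min(2) by (simp add: G_def)
  qed
  from DERIV_nonneg_at_right_min[OF deriv zero_less_one min] show ?thesis
    unfolding p_def[symmetric] bregman_three_point[OF assms(1,2) p_pos assms(4), symmetric] by simp
qed

lemma bregman_proj_le:
  fixes y z :: "'k::finite \<Rightarrow> real"
  assumes "0 \<le> \<alpha>" "\<alpha> \<le> 1" "0 < \<epsilon>" "\<And>i. 0 < z i" "y \<in> simplex_eps \<epsilon>"
  shows "bregman \<alpha> y (proj \<alpha> \<epsilon> z) \<le> bregman \<alpha> y z"
proof -
  have "proj \<alpha> \<epsilon> z \<in> simplex_eps \<epsilon>"
    using assms(5) by (intro proj_in_simplex_eps[OF assms(1-3) _ assms(4)]) auto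
  then have "0 \<le> bregman \<alpha> (proj \<alpha> \<epsilon> z) z"
    by (intro bregman_nonneg[OF assms(1,2) simplex_eps_pos[OF assms(3)] assms(4)])
  then show ?thesis using bregman_proj_pythagoras[where z=z, OF assms] by linarith
qed

lemma bregman_omd_step_le:
  fixes x y lt :: "'k::finite \<Rightarrow> real"
  assumes "0 \<le> \<alpha>" "\<alpha> \<le> 1" "0 < \<epsilon>" "x \<in> simplex_eps \<epsilon>" "y \<in> simplex_eps \<epsilon>"
    "\<And>i. 0 \<le> lt i" "0 \<le> \<eta>"
  shows "bregman \<alpha> y (proj \<alpha> \<epsilon> (mirror_step \<alpha> \<eta> lt x)) \<le> bregman \<alpha> y x
       - \<eta> * (\<Sum>i\<in>UNIV. lt i * (x i - y i)) + \<eta>\<^sup>2 * (\<Sum>i\<in>UNIV. x i powr (2 - \<alpha>) * (lt i)\<^sup>2)"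
proof -
  have x_pos: "\<And>i. 0 < x i" using simplex_eps_pos[OF assms(3,4)] .
  define z where "z = mirror_step \<alpha> \<eta> lt x"
  have z_pos: "\<And>i. 0 < z i" and z_grad: "\<And>i. phi_grad \<alpha> (z i) = phi_grad \<alpha> (x i) - \<eta> * lt i"
    unfolding z_def using mirror_step_grad[where x=x and lt=lt, OF assms(1,2) x_pos assms(6,7)] by auto
  have "bregman \<alpha> y (proj \<alpha> \<epsilon> z) \<le> bregman \<alpha> y z"
    using bregman_proj_le[where z=z, OF assms(1-3) z_pos assms(5)] .
  moreover have "bregman \<alpha> y z - bregman \<alpha> y x - bregman \<alpha> x z = (\<Sum>i\<in>UNIV. - (\<eta> * (lt i * (x i - y i))))"
    unfolding bregman_three_point[OF assms(1,2) x_pos z_pos]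
    by (intro sum.cong) (simp_all add: z_grad algebra_simps)
  moreover have "bregman \<alpha> x z \<le> (\<Sum>i\<in>UNIV. x i powr (2 - \<alpha>) * (\<eta> * lt i)\<^sup>2)"
    unfolding bregman_eq_sum_bregman_scalar[OF assms(1,2) z_pos]
    using assms(6,7) by (intro sum_mono bregman_scalar_le_local_norm assms(1,2) x_pos z_pos z_grad) simp
  moreover have "(\<Sum>i\<in>UNIV. x i powr (2 - \<alpha>) * (\<eta> * lt i)\<^sup>2)
      = \<eta>\<^sup>2 * (\<Sum>i\<in>UNIV. x i powr (2 - \<alpha>) * (lt i)\<^sup>2)"
    by (simp add: power_mult_distrib sum_distrib_left mult_ac)
  moreover have "(\<Sum>i\<in>UNIV. - (\<eta> * (lt i * (x i - y i)))) = - (\<eta> * (\<Sum>i\<in>UNIV. lt i * (x i - y i)))"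
    by (simp add: sum_negf sum_distrib_left)
  ultimately show ?thesis unfolding z_def by linarith
qed

section \<open>Loss estimates\<close>

lemma grad_R_eps_bounds:
  assumes "0 < \<epsilon>" "\<epsilon> \<le> x i"
  shows "0 \<le> grad_R_eps \<epsilon> x i" "grad_R_eps \<epsilon> x i \<le> 1 / \<epsilon>"
  using assms frac_le[of 1 1 \<epsilon> "x i"] by (auto simp: grad_R_eps_def)

lemma loss_tilde_nonneg:
  assumes "0 < \<epsilon>" "x \<in> simplex_eps \<epsilon>" "0 \<le> lam" "0 \<le> l"
  shows "0 \<le> loss_tilde lam \<epsilon> x a l i"
proof -
  have "0 \<le> grad_R_eps \<epsilon> x i"
    using assms(2) by (intro grad_R_eps_bounds(1)[OF assms(1)]) (simp add: simplex_eps_def)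
  moreover have "0 \<le> loss_est x a l i"
    using simplex_eps_pos[OF assms(1,2), of a] assms(4) by (simp add: loss_est_def)
  ultimately show ?thesis using assms(3) by (simp add: loss_tilde_def)
qed

lemma inner_grad_R_eps_ge:
  fixes x y :: "'k::finite \<Rightarrow> real"
  assumes "0 < \<epsilon>" "x \<in> simplex_eps \<epsilon>" "y \<in> simplex_eps \<epsilon>"
  shows "1 - real CARD('k) \<le> (\<Sum>i\<in>UNIV. grad_R_eps \<epsilon> x i * (x i - y i))"
proof -
  have x_pos: "\<And>i. 0 < x i" and y_pos: "\<And>i. 0 < y i"
    using simplex_eps_pos[OF assms(1)] assms(2,3) by auto
  have sums: "(\<Sum>i\<in>UNIV. x i) = 1" "(\<Sum>i\<in>UNIV. y i) = 1" using assms(2,3) by (auto simp: simplex_eps_def)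
  have "(\<Sum>i\<in>UNIV. grad_R_eps \<epsilon> x i * (x i - y i)) = (\<Sum>i\<in>UNIV. y i / x i - 1 + (x i - y i) / \<epsilon>)"
    using x_pos by (intro sum.cong) (simp_all add: grad_R_eps_def field_simps less_imp_neq[symmetric])
  also have "\<dots> = (\<Sum>i\<in>UNIV. y i / x i) - real CARD('k)"
    using sums by (simp add: sum.distrib sum_subtractf sum_divide_distrib[symmetric])
  also have "(\<Sum>i\<in>UNIV. y i) \<le> (\<Sum>i\<in>UNIV. y i / x i)"
    using x_pos y_pos simplex_eps_le_1[OF _ assms(2)] assms(1)
    by (intro sum_mono) (simp add: le_divide_eq mult_left_le less_imp_le)
  then have "1 - real CARD('k) \<le> (\<Sum>i\<in>UNIV. y i / x i) - real CARD('k)" using sums by simp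
  finally show ?thesis .
qed

lemma inner_loss_tilde_ge:
  fixes x y :: "'k::finite \<Rightarrow> real"
  assumes "0 < \<epsilon>" "x \<in> simplex_eps \<epsilon>" "y \<in> simplex_eps \<epsilon>" "0 \<le> lam"
  shows "l / x a * (x a - y a) - lam * (real CARD('k) - 1)
           \<le> (\<Sum>i\<in>UNIV. loss_tilde lam \<epsilon> x a l i * (x i - y i))"
proof -
  have "(\<Sum>i\<in>UNIV. loss_tilde lam \<epsilon> x a l i * (x i - y i))
     = (\<Sum>i\<in>UNIV. loss_est x a l i * (x i - y i)) + lam * (\<Sum>i\<in>UNIV. grad_R_eps \<epsilon> x i * (x i - y i))"
    by (simp add: loss_tilde_def distrib_right sum.distrib sum_distrib_left mult.assoc)
  moreover have "(\<Sum>i\<in>UNIV. loss_est x a l i * (x i - y i)) = l / x a * (x a - y a)"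
    by (simp add: loss_est_def if_distrib[of "\<lambda>v. v * _"] cong: if_cong)
  moreover have "lam * (1 - real CARD('k)) \<le> lam * (\<Sum>i\<in>UNIV. grad_R_eps \<epsilon> x i * (x i - y i))"
    using inner_grad_R_eps_ge[OF assms(1-3)] assms(4) by (rule mult_left_mono)
  ultimately show ?thesis by (simp add: algebra_simps)
qed

lemma loss_tilde_local_norm_le:
  fixes x :: "'k::finite \<Rightarrow> real"
  assumes "0 < \<epsilon>" "x \<in> simplex_eps \<epsilon>" "0 \<le> lam" "0 \<le> l" "l \<le> 1" "\<alpha> \<le> 1"
  shows "(\<Sum>i\<in>UNIV. x i powr (2 - \<alpha>) * (loss_tilde lam \<epsilon> x a l i)\<^sup>2)
         \<le> (lam / \<epsilon>)\<^sup>2 + 2 * (lam / \<epsilon>) + x a powr (2 - \<alpha>) / (x a)\<^sup>2"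
proof -
  have x_pos: "\<And>i. 0 < x i" using simplex_eps_pos[OF assms(1,2)] .
  have x_le: "\<And>i. x i \<le> 1" using simplex_eps_le_1[OF _ assms(2)] assms(1) by simp
  have pw: "x i powr (2 - \<alpha>) \<le> x i" for i
    using x_pos[of i] x_le[of i] assms(6) by (intro powr_le_one_le) auto
  define v where "v = (\<lambda>i. lam * grad_R_eps \<epsilon> x i)"
  have v_nonneg: "0 \<le> v i" and v_le: "v i \<le> lam / \<epsilon>" for i
    using grad_R_eps_bounds[OF assms(1), of x i] assms(2,3)
    by (auto simp: v_def simplex_eps_def intro: mult_left_mono[of _ "1/\<epsilon>" lam, simplified])
  have v_sq: "(v i)\<^sup>2 \<le> (lam / \<epsilon>)\<^sup>2" for i
    using v_nonneg v_le by (intro power_mono)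
  have summand_le: "x i powr (2 - \<alpha>) * (loss_tilde lam \<epsilon> x a l i)\<^sup>2
      \<le> x i * (lam / \<epsilon>)\<^sup>2 + (if i = a then 2 * (lam / \<epsilon>) + x a powr (2 - \<alpha>) / (x a)\<^sup>2 else 0)" for i
  proof (cases "i = a")
    case False
    then show ?thesis
      using mult_mono[OF pw[of i] v_sq[of i]] x_pos[of i] by (simp add: loss_tilde_def loss_est_def v_def)
  next
    case True
    define p where "p = x a powr (2 - \<alpha>)"
    have p_nonneg: "0 \<le> p" and p_le: "p \<le> x a" using pw[of a] by (auto simp: p_def)
    have "p * (l / x a + v a)\<^sup>2 = p * l\<^sup>2 / (x a)\<^sup>2 + 2 * (p * (l / x a)) * v a + p * (v a)\<^sup>2"
      using x_pos[of a] by (simp add: power2_eq_square field_simps)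
    moreover have "p * l\<^sup>2 / (x a)\<^sup>2 \<le> p / (x a)\<^sup>2"
      using p_nonneg assms(4,5) by (intro divide_right_mono mult_left_le) (auto simp: power_le_one)
    moreover have "p * (l / x a) \<le> 1"
      using mult_mono[OF p_le, of "l / x a" "1 / x a"] x_pos[of a] assms(4,5)
      by (simp add: divide_right_mono)
    then have "2 * (p * (l / x a)) * v a \<le> 2 * (lam / \<epsilon>)"
      using mult_mono[of "p * (l / x a)" 1 "v a" "lam / \<epsilon>"] v_nonneg[of a] v_le[of a] p_nonneg assms(4)
        x_pos[of a] by simp
    moreover have "p * (v a)\<^sup>2 \<le> x a * (lam / \<epsilon>)\<^sup>2"
      using p_le v_sq[of a] p_nonneg by (intro mult_mono) auto
    ultimately show ?thesis using True by (simp add: p_def loss_tilde_def loss_est_def v_def)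
  qed
  have "(\<Sum>i\<in>UNIV. x i powr (2 - \<alpha>) * (loss_tilde lam \<epsilon> x a l i)\<^sup>2)
     \<le> (\<Sum>i\<in>UNIV. x i * (lam / \<epsilon>)\<^sup>2 + (if i = a then 2 * (lam / \<epsilon>) + x a powr (2 - \<alpha>) / (x a)\<^sup>2 else 0))"
    by (intro sum_mono summand_le)
  also have "\<dots> = (lam / \<epsilon>)\<^sup>2 + 2 * (lam / \<epsilon>) + x a powr (2 - \<alpha>) / (x a)\<^sup>2"
    using assms(2) by (simp add: sum.distrib sum_distrib_right[symmetric] simplex_eps_def)
  finally show ?thesis .
qed

section \<open>Expected cumulative loss\<close>

context
  fixes P :: "'k::finite \<Rightarrow> real measure" and \<alpha> \<eta> \<epsilon> lam :: real
  assumes prob: "\<And>a. prob_space (P a)" and sets_P: "\<And>a. sets (P a) = sets borel"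
    and loss_range: "\<And>a. AE l in P a. 0 \<le> l \<and> l \<le> 1"
    and params: "0 \<le> \<alpha>" "\<alpha> \<le> 1" "0 < \<epsilon>" "0 < \<eta>" "0 \<le> lam"
begin

lemma integrable_affine_loss: "integrable (P a) (\<lambda>l. c + l * d)"
proof -
  interpret prob_space "P a" by (rule prob)
  have "(\<lambda>l. l) \<in> borel_measurable (P a)" by (simp add: measurable_cong_sets[OF sets_P refl])
  moreover have "AE l in P a. norm l \<le> 1" using loss_range[of a] by (auto elim: eventually_mono)
  ultimately have "integrable (P a) (\<lambda>l. l)" by (intro integrable_const_bound[where B=1])
  then show ?thesis by simp
qed

lemma integral_affine_loss: "(\<integral>l. c + l * d \<partial>P a) = c + mean_loss P a * d"
proof -
  interpret prob_space "P a" by (rule prob)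
  have "integrable (P a) (\<lambda>l. l * d)" using integrable_affine_loss[of a 0 d] by simp
  then show ?thesis by (simp add: mean_loss_def prob_space)
qed

lemma mean_loss_nonneg: "0 \<le> mean_loss P a"
  unfolding mean_loss_def using loss_range[of a] by (intro integral_nonneg_AE) (auto elim: eventually_mono)

lemma mean_loss_le_1: "mean_loss P a \<le> 1"
proof -
  have "mean_loss P a = (\<integral>l. 0 + l * 1 \<partial>P a)" by (simp add: mean_loss_def)
  also have "\<dots> \<le> (\<integral>l. 1 + l * 0 \<partial>P a)"
    using loss_range[of a] by (intro integral_mono_AE integrable_affine_loss) (auto elim: eventually_mono)
  also have "\<dots> = 1" by (simp only: integral_affine_loss)
  finally show ?thesis .
qed

lemma rexp3_next_in_simplex_eps:
  assumes "x \<in> simplex_eps \<epsilon>" "0 \<le> l"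
  shows "rexp3_next \<alpha> \<eta> \<epsilon> lam x a l \<in> simplex_eps \<epsilon>"
proof -
  have "\<And>i. 0 < mirror_step \<alpha> \<eta> (loss_tilde lam \<epsilon> x a l) x i"
    using simplex_eps_pos[OF params(3) assms(1)] loss_tilde_nonneg[OF params(3) assms(1) params(5) assms(2)]
      params(1,2,4)
    by (intro mirror_step_grad(1)) auto
  then show ?thesis
    unfolding rexp3_next_def using assms(1) by (intro proj_in_simplex_eps params(1-3)) auto
qed

lemma rexp3_expected_cum_nonneg:
  "x \<in> simplex_eps \<epsilon> \<Longrightarrow> 0 \<le> rexp3_expected_cum P \<alpha> \<eta> \<epsilon> lam n x"
proof (induction n arbitrary: x)
  case (Suc n)
  have "0 \<le> x i" for i using simplex_eps_pos[OF params(3) Suc.prems] less_imp_le by blast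
  moreover have "AE l in P a. 0 \<le> rexp3_expected_cum P \<alpha> \<eta> \<epsilon> lam n (rexp3_next \<alpha> \<eta> \<epsilon> lam x a l)" for a
    using loss_range[of a] by (auto elim!: eventually_mono intro: Suc.IH rexp3_next_in_simplex_eps Suc.prems)
  ultimately show ?case
    by (auto intro!: add_nonneg_nonneg sum_nonneg mult_nonneg_nonneg integral_nonneg_AE mean_loss_nonneg)
qed simp

lemma rexp3_expected_cum_le_horizon:
  "x \<in> simplex_eps \<epsilon> \<Longrightarrow> rexp3_expected_cum P \<alpha> \<eta> \<epsilon> lam n x \<le> real n"
proof (induction n arbitrary: x)
  case (Suc n)
  have x_nonneg: "0 \<le> x i" for i using simplex_eps_pos[OF params(3) Suc.prems] less_imp_le by blast
  have x_sum: "(\<Sum>i\<in>UNIV. x i) = 1" using Suc.prems by (simp add: simplex_eps_def)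
  have "(\<Sum>i\<in>UNIV. mean_loss P i * x i) \<le> (\<Sum>i\<in>UNIV. x i)"
    using mean_loss_le_1 mean_loss_nonneg x_nonneg by (intro sum_mono mult_left_le_one_le) auto
  moreover have "(\<integral>l. rexp3_expected_cum P \<alpha> \<eta> \<epsilon> lam n (rexp3_next \<alpha> \<eta> \<epsilon> lam x a l) \<partial>P a)
      \<le> real n" for a
  proof -
    have "(\<integral>l. rexp3_expected_cum P \<alpha> \<eta> \<epsilon> lam n (rexp3_next \<alpha> \<eta> \<epsilon> lam x a l) \<partial>P a)
        \<le> (\<integral>l. real n + l * 0 \<partial>P a)"
      using loss_range[of a]
      by (intro integral_mono_AE' integrable_affine_loss)
         (auto elim!: eventually_mono intro: Suc.IH rexp3_next_in_simplex_eps Suc.prems)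
    also have "\<dots> = real n" by (simp only: integral_affine_loss)
    finally show ?thesis .
  qed
  then have "(\<Sum>a\<in>UNIV. x a * (\<integral>l. rexp3_expected_cum P \<alpha> \<eta> \<epsilon> lam n (rexp3_next \<alpha> \<eta> \<epsilon> lam x a l) \<partial>P a))
      \<le> (\<Sum>a\<in>UNIV. x a * real n)"
    using x_nonneg by (intro sum_mono mult_left_mono) simp_all
  ultimately show ?case using x_sum by (simp add: sum_distrib_right[symmetric])
qed simp

text \<open>The right-hand side is affine in the observed loss \<open>l\<close>, so it can be integrated against
  \<open>P a\<close>.\<close>
lemma rexp3_next_bregman_le:
  fixes x y :: "'k \<Rightarrow> real"
  assumes "x \<in> simplex_eps \<epsilon>" "y \<in> simplex_eps \<epsilon>" "0 \<le> l" "l \<le> 1"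
  shows "bregman \<alpha> y (rexp3_next \<alpha> \<eta> \<epsilon> lam x a l) / \<eta>
    \<le> bregman \<alpha> y x / \<eta> - l / x a * (x a - y a) + lam * (real CARD('k) - 1)
       + \<eta> * ((lam / \<epsilon>)\<^sup>2 + 2 * (lam / \<epsilon>) + x a powr (2 - \<alpha>) / (x a)\<^sup>2)"
proof -
  define lt where "lt = loss_tilde lam \<epsilon> x a l"
  have "bregman \<alpha> y (rexp3_next \<alpha> \<eta> \<epsilon> lam x a l) \<le> bregman \<alpha> y x
      - \<eta> * (\<Sum>i\<in>UNIV. lt i * (x i - y i)) + \<eta>\<^sup>2 * (\<Sum>i\<in>UNIV. x i powr (2 - \<alpha>) * (lt i)\<^sup>2)"
    unfolding rexp3_next_def lt_def using params
    by (intro bregman_omd_step_le assms(1,2) loss_tilde_nonneg[OF _ assms(1) _ assms(3)]) auto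
  then have "bregman \<alpha> y (rexp3_next \<alpha> \<eta> \<epsilon> lam x a l) / \<eta> \<le> (bregman \<alpha> y x
      - \<eta> * (\<Sum>i\<in>UNIV. lt i * (x i - y i)) + \<eta>\<^sup>2 * (\<Sum>i\<in>UNIV. x i powr (2 - \<alpha>) * (lt i)\<^sup>2)) / \<eta>"
    using params(4) by (simp add: divide_right_mono)
  also have "\<dots> = bregman \<alpha> y x / \<eta>
      - (\<Sum>i\<in>UNIV. lt i * (x i - y i)) + \<eta> * (\<Sum>i\<in>UNIV. x i powr (2 - \<alpha>) * (lt i)\<^sup>2)"
    using params(4) by (simp add: field_simps power2_eq_square)
  finally have "bregman \<alpha> y (rexp3_next \<alpha> \<eta> \<epsilon> lam x a l) / \<eta> \<le> bregman \<alpha> y x / \<eta>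
      - (\<Sum>i\<in>UNIV. lt i * (x i - y i)) + \<eta> * (\<Sum>i\<in>UNIV. x i powr (2 - \<alpha>) * (lt i)\<^sup>2)" .
  moreover have "l / x a * (x a - y a) - lam * (real CARD('k) - 1) \<le> (\<Sum>i\<in>UNIV. lt i * (x i - y i))"
    unfolding lt_def by (rule inner_loss_tilde_ge[OF params(3) assms(1,2) params(5)])
  moreover have "\<eta> * (\<Sum>i\<in>UNIV. x i powr (2 - \<alpha>) * (lt i)\<^sup>2)
      \<le> \<eta> * ((lam / \<epsilon>)\<^sup>2 + 2 * (lam / \<epsilon>) + x a powr (2 - \<alpha>) / (x a)\<^sup>2)"
    unfolding lt_def using params(4)
    by (intro mult_left_mono loss_tilde_local_norm_le[OF params(3) assms(1) params(5) assms(3,4) params(2)]) simp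
  ultimately show ?thesis by linarith
qed

lemma sum_integral_affine_step_le:
  fixes x y :: "'k \<Rightarrow> real"
  assumes "x \<in> simplex_eps \<epsilon>"
  shows "(\<Sum>a\<in>UNIV. x a * (\<integral>l. B + \<eta> * (x a powr (2 - \<alpha>) / (x a)\<^sup>2) + l * ((y a - x a) / x a) \<partial>P a))
     \<le> B + \<eta> * real CARD('k) - (\<Sum>a\<in>UNIV. mean_loss P a * (x a - y a))"
proof -
  have x_pos: "\<And>i. 0 < x i" using simplex_eps_pos[OF params(3) assms] .
  have x_sum: "(\<Sum>i\<in>UNIV. x i) = 1" using assms by (simp add: simplex_eps_def)
  have "x a * (x a powr (2 - \<alpha>) / (x a)\<^sup>2) \<le> 1" for a
    using powr_le_one_le[OF x_pos[of a] simplex_eps_le_1[OF _ assms]] x_pos[of a] params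
    by (simp add: power2_eq_square divide_le_eq)
  then have local_norm: "(\<Sum>a\<in>UNIV. x a * (x a powr (2 - \<alpha>) / (x a)\<^sup>2)) \<le> real CARD('k)"
    using sum_mono[of UNIV "\<lambda>a. x a * (x a powr (2 - \<alpha>) / (x a)\<^sup>2)" "\<lambda>_. 1"] by simp
  have "(\<Sum>a\<in>UNIV. x a * (\<integral>l. B + \<eta> * (x a powr (2 - \<alpha>) / (x a)\<^sup>2) + l * ((y a - x a) / x a) \<partial>P a))
      = (\<Sum>a\<in>UNIV. x a * B + \<eta> * (x a * (x a powr (2 - \<alpha>) / (x a)\<^sup>2)) - mean_loss P a * (x a - y a))"
    unfolding integral_affine_loss
    by (intro sum.cong) (simp_all add: field_simps less_imp_neq[OF x_pos, symmetric])
  also have "\<dots> = (\<Sum>a\<in>UNIV. x a * B) + \<eta> * (\<Sum>a\<in>UNIV. x a * (x a powr (2 - \<alpha>) / (x a)\<^sup>2))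
      - (\<Sum>a\<in>UNIV. mean_loss P a * (x a - y a))"
    by (simp only: sum.distrib sum_subtractf sum_distrib_left)
  also have "(\<Sum>a\<in>UNIV. x a * B) = B" using x_sum by (simp add: sum_distrib_right[symmetric])
  finally show ?thesis using local_norm params(4) by (simp add: mult_left_mono)
qed

lemma rexp3_expected_cum_le:
  fixes x y :: "'k \<Rightarrow> real"
  assumes "x \<in> simplex_eps \<epsilon>" "y \<in> simplex_eps \<epsilon>"
  shows "rexp3_expected_cum P \<alpha> \<eta> \<epsilon> lam n x \<le> real n * ((\<Sum>i\<in>UNIV. mean_loss P i * y i)
     + lam * (real CARD('k) - 1) + \<eta> * ((lam / \<epsilon>)\<^sup>2 + 2 * (lam / \<epsilon>) + real CARD('k)))
     + bregman \<alpha> y x / \<eta>"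
  using assms(1)
proof (induction n arbitrary: x)
  case 0
  have "0 \<le> bregman \<alpha> y x"
    using simplex_eps_pos[OF params(3)] 0 assms(2) by (intro bregman_nonneg[OF params(1,2)]) auto
  then show ?case using params(4) by simp
next
  case (Suc n)
  define K where "K = real CARD('k)"
  define \<mu>y where "\<mu>y = (\<Sum>i\<in>UNIV. mean_loss P i * y i)"
  define B where "B = real n * (\<mu>y + lam * (K - 1) + \<eta> * ((lam / \<epsilon>)\<^sup>2 + 2 * (lam / \<epsilon>) + K))
    + bregman \<alpha> y x / \<eta> + lam * (K - 1) + \<eta> * ((lam / \<epsilon>)\<^sup>2 + 2 * (lam / \<epsilon>))"
  define h where "h = (\<lambda>a l. B + \<eta> * (x a powr (2 - \<alpha>) / (x a)\<^sup>2) + l * ((y a - x a) / x a))"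
  have step: "rexp3_expected_cum P \<alpha> \<eta> \<epsilon> lam n (rexp3_next \<alpha> \<eta> \<epsilon> lam x a l) \<le> h a l"
    if "0 \<le> l" "l \<le> 1" for a l
  proof -
    have "h a l = B + \<eta> * (x a powr (2 - \<alpha>) / (x a)\<^sup>2) - l / x a * (x a - y a)"
      using simplex_eps_pos[OF params(3) Suc.prems, of a] unfolding h_def by (simp add: field_simps)
    then show ?thesis
      using Suc.IH[OF rexp3_next_in_simplex_eps[OF Suc.prems that(1), of a]]
        rexp3_next_bregman_le[OF Suc.prems assms(2) that, of a]
        distrib_left[of \<eta> "(lam / \<epsilon>)\<^sup>2 + 2 * (lam / \<epsilon>)" "x a powr (2 - \<alpha>) / (x a)\<^sup>2"]
      unfolding B_def K_def \<mu>y_def by linarith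
  qed
  have "(\<integral>l. rexp3_expected_cum P \<alpha> \<eta> \<epsilon> lam n (rexp3_next \<alpha> \<eta> \<epsilon> lam x a l) \<partial>P a)
      \<le> (\<integral>l. h a l \<partial>P a)" for a
  proof -
    have "AE l in P a. 0 \<le> rexp3_expected_cum P \<alpha> \<eta> \<epsilon> lam n (rexp3_next \<alpha> \<eta> \<epsilon> lam x a l)
        \<and> rexp3_expected_cum P \<alpha> \<eta> \<epsilon> lam n (rexp3_next \<alpha> \<eta> \<epsilon> lam x a l) \<le> h a l"
      using loss_range[of a] by (rule eventually_mono)
        (auto intro: step rexp3_expected_cum_nonneg rexp3_next_in_simplex_eps Suc.prems)
    then show ?thesis unfolding h_def
      by (intro integral_mono_AE' integrable_affine_loss) (auto elim: eventually_mono)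
  qed
  then have "(\<Sum>a\<in>UNIV. x a * (\<integral>l. rexp3_expected_cum P \<alpha> \<eta> \<epsilon> lam n (rexp3_next \<alpha> \<eta> \<epsilon> lam x a l) \<partial>P a))
      \<le> (\<Sum>a\<in>UNIV. x a * (\<integral>l. h a l \<partial>P a))"
    using simplex_eps_pos[OF params(3) Suc.prems] by (intro sum_mono mult_left_mono) (auto simp: less_imp_le)
  also have "\<dots> \<le> B + \<eta> * K - (\<Sum>a\<in>UNIV. mean_loss P a * (x a - y a))"
    unfolding h_def K_def by (rule sum_integral_affine_step_le[OF Suc.prems])
  finally have "rexp3_expected_cum P \<alpha> \<eta> \<epsilon> lam (Suc n) x \<le> B + \<eta> * K + \<mu>y"
    by (simp add: \<mu>y_def sum_subtractf right_diff_distrib)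
  then show ?case unfolding B_def K_def \<mu>y_def by (simp add: algebra_simps add_divide_distrib)
qed

end

section \<open>Divergence from the uniform distribution\<close>

lemma bregman_uniform_eq:
  fixes y :: "'k::finite \<Rightarrow> real"
  assumes "0 \<le> \<alpha>" "\<alpha> \<le> 1" "(\<Sum>i\<in>UNIV. y i) = 1"
  shows "bregman \<alpha> y (\<lambda>_. 1 / real CARD('k))
           = (\<Sum>i\<in>UNIV. phi_scalar \<alpha> (y i) - phi_scalar \<alpha> (1 / real CARD('k)))"
proof -
  define u where "u = 1 / real CARD('k)"
  have "bregman \<alpha> y (\<lambda>_. u) = (\<Sum>i\<in>UNIV. bregman_scalar \<alpha> (y i) u)"
    by (rule bregman_eq_sum_bregman_scalar[OF assms(1,2)]) (simp add: u_def)
  also have "\<dots> = (\<Sum>i\<in>UNIV. phi_scalar \<alpha> (y i) - phi_scalar \<alpha> u) - phi_grad \<alpha> u * (\<Sum>i\<in>UNIV. y i - u)"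
    by (simp add: bregman_scalar_def sum_subtractf sum_distrib_left[symmetric])
  also have "(\<Sum>i\<in>UNIV. y i - u) = 0" using assms(3) by (simp add: sum_subtractf u_def)
  finally show ?thesis by (simp add: u_def)
qed

lemma bregman_uniform_eq_powr:
  fixes y :: "'k::finite \<Rightarrow> real"
  assumes "0 < \<alpha>" "\<alpha> < 1" "(\<Sum>i\<in>UNIV. y i) = 1"
  shows "bregman \<alpha> y (\<lambda>_. 1 / real CARD('k))
           = (\<Sum>i\<in>UNIV. (1 / real CARD('k)) powr \<alpha> - y i powr \<alpha>) / (\<alpha> * (1 - \<alpha>))"
proof -
  define u where "u = 1 / real CARD('k)"
  have "phi_scalar \<alpha> (y i) - phi_scalar \<alpha> u = (u powr \<alpha> - y i powr \<alpha>) / (\<alpha> * (1 - \<alpha>)) + (y i - u) / (1 - \<alpha>)" for i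
  proof -
    have "phi_scalar \<alpha> (y i) - phi_scalar \<alpha> u = ((u powr \<alpha> - y i powr \<alpha>) + \<alpha> * (y i - u)) / (\<alpha> * (1 - \<alpha>))"
      using assms(1,2) by (simp add: phi_scalar_def diff_divide_distrib[symmetric] algebra_simps)
    also have "\<dots> = (u powr \<alpha> - y i powr \<alpha>) / (\<alpha> * (1 - \<alpha>)) + (y i - u) / (1 - \<alpha>)"
      using assms(1) by (simp add: add_divide_distrib)
    finally show ?thesis .
  qed
  moreover have "(\<Sum>i\<in>UNIV. (y i - u) / (1 - \<alpha>)) = 0"
    using assms(3) by (simp add: sum_divide_distrib[symmetric] sum_subtractf u_def)
  ultimately show ?thesis
    using bregman_uniform_eq[of \<alpha> y] assms by (simp add: u_def sum.distrib sum_divide_distrib)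
qed

lemma exp_diff_le:
  fixes a b :: real
  shows "exp a - exp b \<le> exp a * (a - b)"
proof -
  have "exp a * (1 + (b - a)) \<le> exp a * exp (b - a)"
    using exp_ge_add_one_self[of "b - a"] by (intro mult_left_mono) simp_all
  then show ?thesis by (simp add: exp_diff algebra_simps)
qed

lemma powr_diff_le_ln_diff:
  fixes t s \<alpha> L :: real
  assumes "0 < t" "t \<le> 1" "0 < s" "0 \<le> \<alpha>" "ln t - ln s \<le> L" "0 \<le> L"
  shows "t powr \<alpha> - s powr \<alpha> \<le> \<alpha> * L"
proof -
  have "t powr \<alpha> - s powr \<alpha> \<le> t powr \<alpha> * (\<alpha> * ln t - \<alpha> * ln s)"
    using exp_diff_le[of "\<alpha> * ln t" "\<alpha> * ln s"] assms(1,3) by (simp add: powr_def less_imp_neq[symmetric])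
  then have "t powr \<alpha> - s powr \<alpha> \<le> t powr \<alpha> * (\<alpha> * (ln t - ln s))"
    by (simp add: right_diff_distrib)
  also have "\<dots> \<le> \<alpha> * L"
  proof (cases "ln s \<le> ln t")
    case True
    have "t powr \<alpha> \<le> 1" using assms(1,2,4) by (simp add: powr_le1)
    then have "t powr \<alpha> * (\<alpha> * (ln t - ln s)) \<le> 1 * (\<alpha> * (ln t - ln s))"
      using True assms(4) by (intro mult_right_mono) auto
    then show ?thesis using assms(4,5) mult_left_mono[OF assms(5) assms(4)] by simp
  next
    case False
    then have "\<alpha> * (ln t - ln s) \<le> 0" using assms(4) by (simp add: mult_nonneg_nonpos)
    then have "t powr \<alpha> * (\<alpha> * (ln t - ln s)) \<le> 0" by (simp add: mult_nonneg_nonpos)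
    then show ?thesis using mult_nonneg_nonneg[OF assms(4,6)] by linarith
  qed
  finally show ?thesis .
qed

lemma simplex_eps_card_mul_le_1:
  fixes x :: "'k::finite \<Rightarrow> real"
  assumes "x \<in> simplex_eps \<epsilon>"
  shows "real CARD('k) * \<epsilon> \<le> 1"
proof -
  have "real CARD('k) * \<epsilon> = (\<Sum>i\<in>(UNIV::'k set). \<epsilon>)" by simp
  also have "\<dots> \<le> (\<Sum>i\<in>UNIV. x i)" using assms by (intro sum_mono) (simp add: simplex_eps_def)
  finally show ?thesis using assms by (simp add: simplex_eps_def)
qed

lemma bregman_uniform_le_of_lt_third:
  fixes y :: "'k::finite \<Rightarrow> real"
  assumes "0 \<le> \<alpha>" "\<alpha> < 1/3" "0 < \<epsilon>" "y \<in> simplex_eps \<epsilon>"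
  shows "bregman \<alpha> y (\<lambda>_. 1 / real CARD('k)) \<le> 3/2 * real CARD('k) * ln (1 / (real CARD('k) * \<epsilon>))"
proof -
  define u where "u = 1 / real CARD('k)"
  define L where "L = ln (1 / (real CARD('k) * \<epsilon>))"
  have y_pos: "\<And>i. 0 < y i" using simplex_eps_pos[OF assms(3,4)] .
  have y_sum: "(\<Sum>i\<in>UNIV. y i) = 1" using assms(4) by (simp add: simplex_eps_def)
  have u: "0 < u" "u \<le> 1" by (auto simp: u_def)
  have ln_diff_le: "ln u - ln (y i) \<le> L" for i
  proof -
    have "ln \<epsilon> \<le> ln (y i)" using assms(3,4) y_pos[of i] by (simp add: simplex_eps_def)
    then show ?thesis using assms(3) by (simp add: L_def u_def ln_div ln_mult)
  qed
  have L_nonneg: "0 \<le> L"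
    using simplex_eps_card_mul_le_1[OF assms(4)] assms(3) by (simp add: L_def)
  have "bregman \<alpha> y (\<lambda>_. u) \<le> (\<Sum>i\<in>(UNIV::'k set). 3/2 * L)"
  proof (cases "\<alpha> = 0")
    case True
    have "bregman \<alpha> y (\<lambda>_. u) = (\<Sum>i\<in>UNIV. (ln u - ln (y i)) + (y i - u))"
      using bregman_uniform_eq[of \<alpha> y] assms(1,2) y_sum True by (simp add: u_def phi_scalar_def algebra_simps)
    also have "\<dots> = (\<Sum>i\<in>UNIV. ln u - ln (y i))"
      using y_sum by (simp add: sum.distrib sum_subtractf u_def)
    also have "\<dots> \<le> (\<Sum>i\<in>(UNIV::'k set). 3/2 * L)"
    proof (intro sum_mono)
      show "ln u - ln (y i) \<le> 3/2 * L" for i using ln_diff_le[of i] L_nonneg by linarith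
    qed
    finally show ?thesis .
  next
    case False
    then have \<alpha>: "0 < \<alpha>" "\<alpha> < 1" using assms(1,2) by auto
    have summand_le: "(u powr \<alpha> - y i powr \<alpha>) / (\<alpha> * (1 - \<alpha>)) \<le> 3/2 * L" for i
    proof -
      have "(u powr \<alpha> - y i powr \<alpha>) / (\<alpha> * (1 - \<alpha>)) \<le> \<alpha> * L / (\<alpha> * (1 - \<alpha>))"
        using powr_diff_le_ln_diff[OF u y_pos[of i] assms(1) ln_diff_le L_nonneg] \<alpha>
        by (intro divide_right_mono) auto
      also have "\<dots> = L / (1 - \<alpha>)" using \<alpha> by simp
      also have "\<dots> \<le> 3/2 * L"
      proof -
        have "L * 1 \<le> L * (3/2 * (1 - \<alpha>))" using \<alpha> assms(2) L_nonneg by (intro mult_left_mono) auto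
        then show ?thesis using \<alpha> by (simp add: divide_le_eq algebra_simps)
      qed
      finally show ?thesis .
    qed
    have "bregman \<alpha> y (\<lambda>_. u) = (\<Sum>i\<in>UNIV. (u powr \<alpha> - y i powr \<alpha>) / (\<alpha> * (1 - \<alpha>)))"
      using bregman_uniform_eq_powr[OF \<alpha> y_sum] by (simp add: u_def sum_divide_distrib)
    also have "\<dots> \<le> (\<Sum>i\<in>(UNIV::'k set). 3/2 * L)" by (intro sum_mono summand_le)
    finally show ?thesis .
  qed
  then show ?thesis by (simp add: u_def L_def)
qed

lemma bregman_uniform_le_of_ge_third:
  fixes y :: "'k::finite \<Rightarrow> real"
  assumes "1/3 \<le> \<alpha>" "\<alpha> \<le> 1" "0 < \<epsilon>" "y \<in> simplex_eps \<epsilon>"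
  shows "bregman \<alpha> y (\<lambda>_. 1 / real CARD('k)) \<le> 3 * (real CARD('k) - 1)"
proof -
  define K where "K = real CARD('k)"
  have K: "1 \<le> K" by (simp add: K_def Suc_leI)
  have y_pos: "\<And>i. 0 < y i" using simplex_eps_pos[OF assms(3,4)] .
  have y_le: "\<And>i. y i \<le> 1" using simplex_eps_le_1[OF _ assms(4)] assms(3) by simp
  have y_sum: "(\<Sum>i\<in>UNIV. y i) = 1" using assms(4) by (simp add: simplex_eps_def)
  show ?thesis
  proof (cases "\<alpha> = 1")
    case True
    have "bregman \<alpha> y (\<lambda>_. 1 / K) = (\<Sum>i\<in>UNIV. y i * ln (y i) + (1 / K - y i) - 1 / K * ln (1 / K))"
      using bregman_uniform_eq[of \<alpha> y] True y_sum
      by (simp add: K_def phi_scalar_def algebra_simps)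
    also have "\<dots> = (\<Sum>i\<in>UNIV. y i * ln (y i)) + (1 - (\<Sum>i\<in>UNIV. y i)) + ln K"
      using K by (simp add: sum.distrib sum_subtractf K_def ln_div)
    also have "\<dots> \<le> 0 + 0 + (K - 1)"
      using y_pos y_le y_sum ln_le_minus_one[of K] K
      by (intro add_mono sum_nonpos mult_nonneg_nonpos) (auto simp: less_imp_le)
    also have "\<dots> \<le> 3 * (K - 1)" using K by simp
    finally show ?thesis by (simp add: K_def)
  next
    case False
    then have \<alpha>: "0 < \<alpha>" "\<alpha> < 1" using assms(1,2) by auto
    have "(\<Sum>i\<in>UNIV. y i) \<le> (\<Sum>i\<in>UNIV. y i powr \<alpha>)"
      using y_pos y_le powr_mono'[of \<alpha> 1] \<alpha> by (intro sum_mono) (metis less_imp_le powr_one_gt_zero_iff)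
    moreover have "K * (1 / K) powr \<alpha> \<le> 1 + (1 - \<alpha>) * (K - 1)"
      using Youngs_inequality_0[of "1 - \<alpha>" \<alpha> K 1] \<alpha> K
      by (simp add: powr_divide powr_diff algebra_simps)
    ultimately have "(\<Sum>i\<in>UNIV. (1 / K) powr \<alpha> - y i powr \<alpha>) \<le> (1 - \<alpha>) * (K - 1)"
      using y_sum by (simp add: sum_subtractf K_def)
    then have "(\<Sum>i\<in>UNIV. (1 / K) powr \<alpha> - y i powr \<alpha>) / (\<alpha> * (1 - \<alpha>))
        \<le> (1 - \<alpha>) * (K - 1) / (\<alpha> * (1 - \<alpha>))"
      using \<alpha> by (intro divide_right_mono) auto
    then have "bregman \<alpha> y (\<lambda>_. 1 / K) \<le> (1 - \<alpha>) * (K - 1) / (\<alpha> * (1 - \<alpha>))"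
      using bregman_uniform_eq_powr[OF \<alpha> y_sum] by (simp only: K_def)
    also have "\<dots> = (K - 1) / \<alpha>" using \<alpha> by simp
    also have "\<dots> \<le> 3 * (K - 1)"
    proof -
      have "(K - 1) * 1 \<le> (K - 1) * (3 * \<alpha>)" using K assms(1) by (intro mult_left_mono) auto
      then have "K - 1 \<le> 3 * (K - 1) * \<alpha>" by (simp add: algebra_simps)
      then show ?thesis using \<alpha> by (simp add: divide_le_eq)
    qed
    finally show ?thesis by (simp add: K_def)
  qed
qed

section \<open>Degenerate regimes and parameter tuning\<close>

lemma simplex_eps_card_1:
  assumes "CARD('k::finite) = 1" "x \<in> simplex_eps \<epsilon>"
  shows "x = (\<lambda>_::'k. 1)"
proof -
  obtain i0 :: 'k where U: "UNIV = {i0}" using assms(1) card_1_singletonE by blast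
  have "(\<Sum>j\<in>UNIV. x j) = x i0" by (simp add: U)
  then have "x i0 = 1" using assms(2) by (simp add: simplex_eps_def)
  then show ?thesis using U by (auto simp: fun_eq_iff)
qed

lemma proj_in_simplex_eps_card_1:
  fixes y z :: "'k::finite \<Rightarrow> real"
  assumes "CARD('k) = 1" "y \<in> simplex_eps \<epsilon>"
  shows "proj \<alpha> \<epsilon> z \<in> simplex_eps \<epsilon>"
proof -
  have "simplex_eps \<epsilon> = {y}" using simplex_eps_card_1[OF assms(1)] assms(2) by blast
  then have "is_arg_min (\<lambda>x. bregman \<alpha> x z) (\<lambda>x. x \<in> simplex_eps \<epsilon>) y"
    by (simp add: is_arg_min_def)
  then have "is_arg_min (\<lambda>x. bregman \<alpha> x z) (\<lambda>x. x \<in> simplex_eps \<epsilon>) (proj \<alpha> \<epsilon> z)"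
    unfolding proj_def arg_min_def by (rule someI[of _ y])
  then show ?thesis by (simp add: is_arg_min_def)
qed

text \<open>Needed separately: it covers \<open>T = 1\<close>, where \<open>\<epsilon> = 0\<close>.\<close>
lemma rexp3_expected_cum_card_1:
  fixes P :: "'k::finite \<Rightarrow> real measure"
  assumes "CARD('k) = 1" "\<And>a. prob_space (P a)" "x \<in> simplex_eps \<epsilon>"
  shows "rexp3_expected_cum P \<alpha> \<eta> \<epsilon> lam n x = real n * (\<Sum>i\<in>UNIV. mean_loss P i)"
  using assms(3)
proof (induction n arbitrary: x)
  case (Suc n)
  define M where "M = (\<Sum>i\<in>UNIV. mean_loss P i)"
  have "rexp3_expected_cum P \<alpha> \<eta> \<epsilon> lam n (rexp3_next \<alpha> \<eta> \<epsilon> lam x a l) = real n * M" for a l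
    unfolding rexp3_next_def M_def by (rule Suc.IH[OF proj_in_simplex_eps_card_1[OF assms(1) Suc.prems]])
  moreover have "(\<integral>l. c \<partial>P a) = c" for a and c :: real
    using prob_space.prob_space[OF assms(2)] by simp
  ultimately have "rexp3_expected_cum P \<alpha> \<eta> \<epsilon> lam (Suc n) x
      = (\<Sum>i\<in>UNIV. mean_loss P i * x i) + (\<Sum>a\<in>UNIV. x a * (real n * M))"
    by (simp only: rexp3_expected_cum.simps)
  also have "\<dots> = real (Suc n) * M"
    using simplex_eps_card_1[OF assms(1) Suc.prems] assms(1) by (simp add: M_def algebra_simps)
  finally show ?case unfolding M_def .
qed simp

definition C_alpha :: "real \<Rightarrow> real \<Rightarrow> nat \<Rightarrow> real" where
  "C_alpha \<alpha> K T = (if \<alpha> < 1/3 then 3 * K * ln (real T) / 2 else 3 * K * ln K)"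

definition rexp3_regret_bound :: "real \<Rightarrow> real \<Rightarrow> real \<Rightarrow> nat \<Rightarrow> real" where
  "rexp3_regret_bound K C g T = C / sqrt (real T) + K / sqrt (real T)
     + (1 / sqrt (real T)) * (g\<^sup>2 / (ln (real T))\<^sup>2) + K * g * ln (real T) / (2 * sqrt (real T))"

lemma C_alpha_nonneg: "1 \<le> K \<Longrightarrow> 1 \<le> T \<Longrightarrow> 0 \<le> C_alpha \<alpha> K T"
  by (simp add: C_alpha_def)

lemma rexp3_regret_bound_ge:
  assumes "0 \<le> C" "0 \<le> g" "0 \<le> K" "1 \<le> T"
  shows "K / sqrt (real T) \<le> rexp3_regret_bound K C g T"
  using assms by (simp add: rexp3_regret_bound_def)

lemma x_minus_one_le_x_ln_x:
  fixes x :: real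
  assumes "0 < x"
  shows "x - 1 \<le> x * ln x"
proof -
  have "- ln x \<le> 1 / x - 1" using ln_le_minus_one[of "1 / x"] assms by (simp add: ln_div)
  then have "x * (- ln x) \<le> x * (1 / x - 1)" using assms by (intro mult_left_mono) auto
  then show ?thesis using assms by (simp add: algebra_simps)
qed

lemma three_pred_add_le_three_mul_ln:
  fixes n :: nat
  assumes "2 \<le> n"
  shows "3 * (real n - 1) + 2 / real n \<le> 3 * real n * ln (real n)"
proof (cases "n = 2")
  case True
  then show ?thesis using ln2_ge_two_thirds by simp
next
  case False
  then have "exp 1 \<le> real n" using exp_le assms by simp
  then have "1 \<le> ln (real n)" using ln_le_cancel_iff[of "exp 1" "real n"] assms by simp
  have "2 / real n \<le> 1" using assms by simp
  then have "3 * (real n - 1) + 2 / real n \<le> 3 * real n * 1" by simp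
  also have "\<dots> \<le> 3 * real n * ln (real n)" using \<open>1 \<le> ln (real n)\<close> by (intro mult_left_mono) auto
  finally show ?thesis .
qed

lemma bregman_uniform_add_le_C_alpha:
  fixes y :: "'k::finite \<Rightarrow> real"
  assumes "0 \<le> \<alpha>" "\<alpha> \<le> 1" "2 \<le> CARD('k)" "(real CARD('k))\<^sup>2 < real T"
    "y \<in> simplex_eps (ln (real T) / sqrt (real T))"
  shows "bregman \<alpha> y (\<lambda>_. 1 / real CARD('k)) + 2 / real CARD('k) \<le> C_alpha \<alpha> (real CARD('k)) T"
proof -
  define K where "K = real CARD('k)"
  have K: "2 \<le> K" using assms(3) by (simp add: K_def)
  have "2 * 2 \<le> K * K" using K by (intro mult_mono) auto
  then have T4: "4 < real T" using assms(4) by (simp add: K_def power2_eq_square)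
  have lnT: "1 \<le> ln (real T)"
    using exp_le T4 ln_le_cancel_iff[of "exp 1" "real T"] by simp
  have \<epsilon>: "0 < ln (real T) / sqrt (real T)" using lnT T4 by simp
  show ?thesis
  proof (cases "\<alpha> < 1/3")
    case True
    have "1 * sqrt (real T) \<le> (K * ln (real T)) * sqrt (real T)"
      using K lnT mult_mono[of 1 K 1 "ln (real T)"] by (intro mult_right_mono) auto
    then have "1 / (K * (ln (real T) / sqrt (real T))) \<le> sqrt (real T)"
      using K lnT T4 by (simp add: field_simps)
    then have "ln (1 / (K * (ln (real T) / sqrt (real T)))) \<le> ln (sqrt (real T))"
      using K lnT T4 by (intro ln_mono) auto
    then have "3/2 * K * ln (1 / (K * (ln (real T) / sqrt (real T)))) \<le> 3/2 * K * (ln (real T) / 2)"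
      using K by (intro mult_left_mono) (auto simp: ln_sqrt)
    moreover have "bregman \<alpha> y (\<lambda>_. 1 / K) \<le> 3/2 * K * ln (1 / (K * (ln (real T) / sqrt (real T))))"
      using bregman_uniform_le_of_lt_third[OF assms(1) True \<epsilon> assms(5)] by (simp only: K_def)
    ultimately have "bregman \<alpha> y (\<lambda>_. 1 / K) \<le> 3/2 * K * (ln (real T) / 2)" by linarith
    moreover have "2 / K \<le> 3/4 * K * ln (real T)"
    proof -
      have "2 \<le> K * ln (real T)" using K lnT mult_mono[of 2 K 1 "ln (real T)"] by simp
      moreover have "2 / K \<le> 1" using K by simp
      ultimately show ?thesis by simp
    qed
    ultimately show ?thesis using True K by (simp add: C_alpha_def K_def)
  next
    case False
    then have "bregman \<alpha> y (\<lambda>_. 1 / K) \<le> 3 * (K - 1)"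
      using bregman_uniform_le_of_ge_third[OF _ assms(2) \<epsilon> assms(5)] by (simp add: K_def)
    moreover have "3 * (K - 1) + 2 / K \<le> 3 * K * ln K"
      unfolding K_def by (rule three_pred_add_le_three_mul_ln[OF assms(3)])
    ultimately show ?thesis using False by (simp add: C_alpha_def K_def)
  qed
qed

lemma rexp3_tuned_cost_le:
  fixes K g C D :: real and T :: nat
  defines "\<eta> \<equiv> 1 / sqrt (real T)" and "\<epsilon> \<equiv> ln (real T) / sqrt (real T)"
    and "lam \<equiv> g / sqrt (K * real T)"
  assumes "2 \<le> K" "1 < T" "0 \<le> g" "K - 1 \<le> K * ln (real T) / 2" "D + 2 / K \<le> C"
  shows "lam * (K - 1) + \<eta> * ((lam / \<epsilon>)\<^sup>2 + 2 * (lam / \<epsilon>) + K) + D / sqrt (real T)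
           \<le> rexp3_regret_bound K C g T"
proof -
  define R where "R = sqrt (real T)"
  define L where "L = ln (real T)"
  define s where "s = sqrt K"
  define a where "a = g / L"
  have R: "0 < R" using assms(5) by (simp add: R_def)
  have L: "0 < L" using assms(5) by (simp add: L_def)
  have s: "1 \<le> s" "s\<^sup>2 = K" using assms(4) by (auto simp: s_def)
  have "0 \<le> g * (K - 1)" using assms(4,6) by simp
  then have "g * (K - 1) * 1 \<le> g * (K - 1) * s" using s(1) by (intro mult_left_mono)
  then have "g * (K - 1) / s \<le> g * (K - 1)" using s(1) by (simp add: divide_le_eq)
  also have "\<dots> \<le> K * g * L / 2"
    using mult_left_mono[OF assms(7) assms(6)] by (simp add: L_def algebra_simps)
  finally have cost_reg: "g * (K - 1) / s \<le> K * g * L / 2" .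
  have "0 \<le> (a - 2 / s)\<^sup>2 / 2" by simp
  also have "(a - 2 / s)\<^sup>2 / 2 = a\<^sup>2 / 2 - 2 * a / s + 2 / K"
    using s unfolding s(2)[symmetric] by (simp add: power2_eq_square field_simps)
  finally have cost_cross: "2 * a / s \<le> a\<^sup>2 / 2 + 2 / K" by simp
  have cost_sq: "a\<^sup>2 / K \<le> a\<^sup>2 / 2" using assms(4) by (intro divide_left_mono) auto
  have "lam * (K - 1) + \<eta> * ((lam / \<epsilon>)\<^sup>2 + 2 * (lam / \<epsilon>) + K) + D / R
      = (g * (K - 1) / s + a\<^sup>2 / K + 2 * a / s + K + D) / R"
    using R L s unfolding lam_def \<eta>_def \<epsilon>_def a_def s_def R_def L_def
    by (simp add: real_sqrt_mult power_divide field_simps)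
  also have "\<dots> \<le> (C + a\<^sup>2 + K * g * L / 2 + K) / R"
    using cost_reg cost_cross cost_sq assms(8) R by (intro divide_right_mono; linarith)
  also have "\<dots> = rexp3_regret_bound K C g T"
    using R L by (simp add: rexp3_regret_bound_def R_def L_def a_def power_divide field_simps)
  finally show ?thesis by (simp add: R_def)
qed

lemma rexp3_regret_card_1:
  fixes P :: "'k::finite \<Rightarrow> real measure" and y :: "'k \<Rightarrow> real"
  assumes "\<And>a. prob_space (P a)" "CARD('k) = 1" "1 \<le> T" "0 \<le> C" "0 \<le> g" "y \<in> simplex_eps \<epsilon>"
  shows "rexp3_expected_cum P \<alpha> \<eta> \<epsilon> lam T (rexp3_x1 \<alpha> \<epsilon>) / real T - (\<Sum>i\<in>UNIV. mean_loss P i * y i)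
           \<le> rexp3_regret_bound (real CARD('k)) C g T"
proof -
  have "(rexp3_x1 \<alpha> \<epsilon> :: 'k \<Rightarrow> real) \<in> simplex_eps \<epsilon>"
    unfolding rexp3_x1_def by (rule proj_in_simplex_eps_card_1[OF assms(2,6)])
  then have "rexp3_expected_cum P \<alpha> \<eta> \<epsilon> lam T (rexp3_x1 \<alpha> \<epsilon>) / real T - (\<Sum>i\<in>UNIV. mean_loss P i * y i) = 0"
    using rexp3_expected_cum_card_1[OF assms(2,1)] simplex_eps_card_1[OF assms(2,6)] assms(3) by simp
  also have "\<dots> \<le> real CARD('k) / sqrt (real T)" by simp
  also have "\<dots> \<le> rexp3_regret_bound (real CARD('k)) C g T"
    using assms(3-5) by (intro rexp3_regret_bound_ge) simp_all
  finally show ?thesis .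
qed

lemma rexp3_regret_le_of_le_card_sq:
  fixes P :: "'k::finite \<Rightarrow> real measure" and y :: "'k \<Rightarrow> real" and T :: nat and g :: real
  defines "K \<equiv> real CARD('k)"
  defines "\<eta> \<equiv> 1 / sqrt (real T)" and "\<epsilon> \<equiv> ln (real T) / sqrt (real T)" and "lam \<equiv> g / sqrt (K * real T)"
  assumes "\<And>a. prob_space (P a)" "\<And>a. sets (P a) = sets borel" "\<And>a. AE l in P a. 0 \<le> l \<and> l \<le> 1"
    and "0 \<le> \<alpha>" "\<alpha> \<le> 1" "0 \<le> g" "0 \<le> C" "2 \<le> CARD('k)" "CARD('k) \<le> T" "real T \<le> K\<^sup>2"
    and "y \<in> simplex_eps \<epsilon>"
  shows "rexp3_expected_cum P \<alpha> \<eta> \<epsilon> lam T (rexp3_x1 \<alpha> \<epsilon>) / real T - (\<Sum>i\<in>UNIV. mean_loss P i * y i)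
           \<le> rexp3_regret_bound K C g T"
proof -
  have T: "2 \<le> T" using assms(12,13) by simp
  have params: "0 < \<epsilon>" "0 < \<eta>" "0 \<le> lam"
    using T assms(10) by (simp_all add: \<epsilon>_def \<eta>_def lam_def K_def)
  have "(rexp3_x1 \<alpha> \<epsilon> :: 'k \<Rightarrow> real) \<in> simplex_eps \<epsilon>"
    unfolding rexp3_x1_def using assms(15) by (intro proj_in_simplex_eps assms(8,9) params) auto
  then have "rexp3_expected_cum P \<alpha> \<eta> \<epsilon> lam T (rexp3_x1 \<alpha> \<epsilon>) \<le> real T"
    by (rule rexp3_expected_cum_le_horizon[where P=P, OF assms(5-9) params])
  then have "rexp3_expected_cum P \<alpha> \<eta> \<epsilon> lam T (rexp3_x1 \<alpha> \<epsilon>) / real T \<le> 1"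
    using T by (simp add: divide_le_eq)
  moreover have "0 \<le> (\<Sum>i\<in>UNIV. mean_loss P i * y i)"
    using mean_loss_nonneg[where P=P, OF assms(5-9) params] simplex_eps_pos[OF params(1) assms(15)]
    by (intro sum_nonneg) (simp add: less_imp_le)
  moreover have "1 \<le> K / sqrt (real T)"
    using real_sqrt_le_mono[OF assms(14)] T by (simp add: K_def)
  moreover have "K / sqrt (real T) \<le> rexp3_regret_bound K C g T"
    using T assms(10,11) by (intro rexp3_regret_bound_ge) (simp_all add: K_def)
  ultimately show ?thesis by linarith
qed

lemma rexp3_regret_le_of_card_sq_less:
  fixes P :: "'k::finite \<Rightarrow> real measure" and y :: "'k \<Rightarrow> real" and T :: nat and g :: real
  defines "K \<equiv> real CARD('k)"
  defines "\<eta> \<equiv> 1 / sqrt (real T)" and "\<epsilon> \<equiv> ln (real T) / sqrt (real T)" and "lam \<equiv> g / sqrt (K * real T)"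
  assumes "\<And>a. prob_space (P a)" "\<And>a. sets (P a) = sets borel" "\<And>a. AE l in P a. 0 \<le> l \<and> l \<le> 1"
    and "0 \<le> \<alpha>" "\<alpha> \<le> 1" "0 \<le> g" "2 \<le> CARD('k)" "K\<^sup>2 < real T" "y \<in> simplex_eps \<epsilon>"
  shows "rexp3_expected_cum P \<alpha> \<eta> \<epsilon> lam T (rexp3_x1 \<alpha> \<epsilon>) / real T - (\<Sum>i\<in>UNIV. mean_loss P i * y i)
           \<le> rexp3_regret_bound K (C_alpha \<alpha> K T) g T"
proof -
  define u where "u = (\<lambda>_::'k. 1 / K)"
  have K: "2 \<le> K" using assms(11) by (simp add: K_def)
  have "2 * 2 \<le> K * K" using K by (intro mult_mono) auto
  then have T: "4 < real T" using assms(12) by (simp add: power2_eq_square)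
  have params: "0 < \<epsilon>" "0 < \<eta>" "0 \<le> lam"
    using T assms(10) by (simp_all add: \<epsilon>_def \<eta>_def lam_def K_def)
  have x1: "(rexp3_x1 \<alpha> \<epsilon> :: 'k \<Rightarrow> real) \<in> simplex_eps \<epsilon>"
    unfolding rexp3_x1_def using assms(13) by (intro proj_in_simplex_eps assms(8,9) params) auto
  have D_eq: "bregman \<alpha> y (rexp3_x1 \<alpha> \<epsilon>) / \<eta> = real T * (bregman \<alpha> y (rexp3_x1 \<alpha> \<epsilon>) / sqrt (real T))"
  proof -
    have "real T * (bregman \<alpha> y (rexp3_x1 \<alpha> \<epsilon>) / sqrt (real T))
        = bregman \<alpha> y (rexp3_x1 \<alpha> \<epsilon>) * (real T / sqrt (real T))" by simp
    then show ?thesis by (simp add: real_div_sqrt \<eta>_def)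
  qed
  have "rexp3_expected_cum P \<alpha> \<eta> \<epsilon> lam T (rexp3_x1 \<alpha> \<epsilon>) \<le> real T * ((\<Sum>i\<in>UNIV. mean_loss P i * y i)
      + lam * (K - 1) + \<eta> * ((lam / \<epsilon>)\<^sup>2 + 2 * (lam / \<epsilon>) + K)) + bregman \<alpha> y (rexp3_x1 \<alpha> \<epsilon>) / \<eta>"
    unfolding K_def by (rule rexp3_expected_cum_le[where P=P and n=T, OF assms(5-9) params x1 assms(13)])
  then have "rexp3_expected_cum P \<alpha> \<eta> \<epsilon> lam T (rexp3_x1 \<alpha> \<epsilon>) \<le> real T * ((\<Sum>i\<in>UNIV. mean_loss P i * y i)
      + lam * (K - 1) + \<eta> * ((lam / \<epsilon>)\<^sup>2 + 2 * (lam / \<epsilon>) + K) + bregman \<alpha> y (rexp3_x1 \<alpha> \<epsilon>) / sqrt (real T))"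
    unfolding D_eq by (simp only: distrib_left)
  then have "rexp3_expected_cum P \<alpha> \<eta> \<epsilon> lam T (rexp3_x1 \<alpha> \<epsilon>) / real T \<le> (\<Sum>i\<in>UNIV. mean_loss P i * y i)
      + lam * (K - 1) + \<eta> * ((lam / \<epsilon>)\<^sup>2 + 2 * (lam / \<epsilon>) + K) + bregman \<alpha> y (rexp3_x1 \<alpha> \<epsilon>) / sqrt (real T)"
    using T by (subst pos_divide_le_eq) (simp_all add: mult.commute)
  then have "rexp3_expected_cum P \<alpha> \<eta> \<epsilon> lam T (rexp3_x1 \<alpha> \<epsilon>) / real T - (\<Sum>i\<in>UNIV. mean_loss P i * y i)
      \<le> lam * (K - 1) + \<eta> * ((lam / \<epsilon>)\<^sup>2 + 2 * (lam / \<epsilon>) + K) + bregman \<alpha> y (rexp3_x1 \<alpha> \<epsilon>) / sqrt (real T)"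
    by linarith
  also have "bregman \<alpha> y (rexp3_x1 \<alpha> \<epsilon>) \<le> bregman \<alpha> y u"
    unfolding rexp3_x1_def u_def K_def by (rule bregman_proj_le[OF assms(8,9) params(1) _ assms(13)]) simp
  also have "lam * (K - 1) + \<eta> * ((lam / \<epsilon>)\<^sup>2 + 2 * (lam / \<epsilon>) + K) + bregman \<alpha> y u / sqrt (real T)
      \<le> rexp3_regret_bound K (C_alpha \<alpha> K T) g T"
  proof (unfold \<eta>_def \<epsilon>_def lam_def, rule rexp3_tuned_cost_le)
    have "ln K \<le> ln (real T) / 2"
      using ln_mono[OF less_imp_le[OF assms(12)]] K by (simp add: ln_realpow)
    then have "K * ln K \<le> K * (ln (real T) / 2)" using K by (intro mult_left_mono) auto
    then show "K - 1 \<le> K * ln (real T) / 2" using x_minus_one_le_x_ln_x[of K] K by linarith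
    show "bregman \<alpha> y u + 2 / K \<le> C_alpha \<alpha> K T"
      using bregman_uniform_add_le_C_alpha[OF assms(8,9,11)] assms(12,13)
      by (simp add: u_def K_def \<epsilon>_def)
  qed (use K T assms(10) in simp_all)
  finally show ?thesis by (simp add: divide_right_mono)
qed

theorem lemma6:
  fixes P :: "'k::finite \<Rightarrow> real measure"
    and \<alpha> :: real and \<gamma> :: "nat \<Rightarrow> real" and T :: nat and y :: "'k \<Rightarrow> real"
  assumes "\<And>a. prob_space (P a)"
    and "\<And>a. sets (P a) = sets borel"
    and "\<And>a. AE l in P a. 0 \<le> l \<and> l \<le> 1"
    and "0 \<le> \<alpha>" and "\<alpha> \<le> 1"
    and "\<And>n. 0 < \<gamma> n"
    and "\<And>n. 2 \<le> n \<Longrightarrow> \<gamma> n \<le> (ln (real n))^2"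
    and "(\<lambda>n. \<gamma> n / (ln (real n))^2) \<longlonglongrightarrow> 0"
    and "\<alpha> < 1/3 \<Longrightarrow> (\<lambda>n. ln (real n) / \<gamma> n) \<longlonglongrightarrow> 0"
    and "CARD('k) \<le> T"
    and "y \<in> simplex_eps (ln (real T) / sqrt (real T))"
  shows
    "(let K = real CARD('k);
          \<eta> = 1 / sqrt (real T);
          \<epsilon> = ln (real T) / sqrt (real T);
          lam = \<gamma> T / sqrt (K * real T);
          C = (if \<alpha> < 1/3 then 3 * K * ln (real T) / 2 else 3 * K * ln K)
      in rexp3_expected_cum P \<alpha> \<eta> \<epsilon> lam T (rexp3_x1 \<alpha> \<epsilon>) / real T
           - (\<Sum>i\<in>UNIV. mean_loss P i * y i)
         \<le> C / sqrt (real T) + K / sqrt (real T)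
            + (1 / sqrt (real T)) * (\<gamma> T ^ 2 / (ln (real T))^2)
            + K * \<gamma> T * ln (real T) / (2 * sqrt (real T)))"
proof -
  txt \<open>The growth conditions on \<open>\<gamma>\<close> only matter for reading the bound asymptotically; for fixed
    \<open>T\<close> it holds for every positive \<open>\<gamma> T\<close>.\<close>
  define K where "K = real CARD('k)"
  have T: "1 \<le> T" using assms(10) by (metis One_nat_def Suc_leI le_trans zero_less_card_finite)
  have g: "0 \<le> \<gamma> T" using assms(6) less_imp_le by blast
  have C: "0 \<le> C_alpha \<alpha> K T" using T by (intro C_alpha_nonneg) (simp_all add: K_def Suc_leI)
  have "rexp3_expected_cum P \<alpha> (1 / sqrt (real T)) (ln (real T) / sqrt (real T)) (\<gamma> T / sqrt (K * real T))
          T (rexp3_x1 \<alpha> (ln (real T) / sqrt (real T))) / real T - (\<Sum>i\<in>UNIV. mean_loss P i * y i)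
        \<le> rexp3_regret_bound K (C_alpha \<alpha> K T) (\<gamma> T) T"
  proof (cases "CARD('k) = 1")
    case True
    show ?thesis
      unfolding K_def using rexp3_regret_card_1[where P=P, OF assms(1) True T C[unfolded K_def] g assms(11)] .
  next
    case False
    then have "2 \<le> CARD('k)" using zero_less_card_finite[where 'a='k] by linarith
    then show ?thesis
      using rexp3_regret_le_of_le_card_sq[where P=P, OF assms(1-5) g C _ assms(10) _ assms(11)]
        rexp3_regret_le_of_card_sq_less[where P=P, OF assms(1-5) g _ _ assms(11)]
      unfolding K_def by (cases "real T \<le> (real CARD('k))\<^sup>2") simp_all
  qed
  then show ?thesis by (simp add: Let_def rexp3_regret_bound_def C_alpha_def K_def)
qed

end
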